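(* In the process algebra $\mathcal{G}$ described in the context, let $\mathbb{U}=U_{i_1}U_{i_2}\cdots U_{i_l}$ and $\mathbb{V}=V_{j_1}V_{j_2}\cdots V_{j_r}$ with all $i_s,j_s\in\mathcal{N}$, let $B\in\{\epsilon,Z,G_v\}$, let $\mathbb{P}$ be any sequential composition (possibly empty) of constants from $\{U_k,V_k:k\in\mathcal{N}\}$, and let $\approxeq\;\in\{\simeq,\approx\}$. Then: (1) $I\|B\mathbb{P}\mathbb{U}\approxeq I\|B\mathbb{P}\mathbb{V}$ if and only if $u_{i_1}u_{i_2}\cdots u_{i_l}=v_{j_1}v_{j_2}\cdots v_{j_r}$; (2) $S\|B\mathbb{P}\mathbb{U}\approxeq S\|B\mathbb{P}\mathbb{V}$ if and only if the index sequences coincide: $i_1i_2\cdots i_l=j_1j_2\cdots j_r$.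
   Context: Process algebras: a triple $(\mathcal{C},\mathcal{A},\Delta)$ of finitely many constants, actions (including silent $\tau$) and rules $X\stackrel{\ell}{\longrightarrow}P$. Processes: $P::=\epsilon\mid X\mid PP'\mid P\|P'$, sequential composition associative, parallel composition associative and commutative, $\epsilon$ a unit for both. Semantics: rules of $\Delta$; if $P\stackrel{\ell}{\longrightarrow}P'$ then $PQ\stackrel{\ell}{\longrightarrow}P'Q$, $P\|Q\stackrel{\ell}{\longrightarrow}P'\|Q$, $Q\|P\stackrel{\ell}{\longrightarrow}Q\|P'$. $\Longrightarrow$ is the reflexive transitive closure of $\stackrel{\tau}{\longrightarrow}$; $\stackrel{\widehat{\ell}}{\Longrightarrow}$ is $\Longrightarrow\stackrel{\ell}{\longrightarrow}\Longrightarrow$ if $\ell\ne\tau$ and $\Longrightarrow$ if $\ell=\tau$. Weak bisimilarity $\approx$ is the largest relation $\mathcal{B}$ such that whenever $P\mathcal{B}Q$ and $P\stackrel{\ell}{\longrightarrow}P'$ there is $Q'$ with $Q\stackrel{\widehat{\ell}}{\Longrightarrow}Q'$, $P'\mathcal{B}Q'$, and symmetrically. Branching bisimilarity $\simeq$ is the largest relation $\mathcal{B}$ such that whenever $P\mathcal{B}Q$ and $P\stackrel{\ell}{\longrightarrow}P'$, either $Q\Longrightarrow Q''\stackrel{\ell}{\longrightarrow}Q'$ with $P\mathcal{B}Q''$ and $P'\mathcal{B}Q'$, or $\ell=\tau$ and $P'\mathcal{B}Q$; and symmetrically. The algebra $\mathcal{G}$: fix a finite alphabet $\Sigma$ with $|\Sigma|\ge2$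 and a Post Correspondence instance $\mathrm{INST}=\{(u_1,v_1),\dots,(u_n,v_n)\}$ with $u_k,v_k\in\Sigma^{+}$; let $\mathcal{N}=\{1,\dots,n\}$. Actions: $\{\lambda_U,\lambda_V,\lambda_D,\lambda_I,\lambda_S,\lambda_Z\}\cup\mathcal{N}\cup\Sigma\cup\{\tau\}$. Constants: $X,Y,Z,I,S,C,C',D,G,G',G_u,G_v,G_v'$, $U_k,V_k$ ($k\in\mathcal{N}$), and $W(\omega,k),W(\omega,0)$ for $k\in\mathcal{N}$ and $\omega$ a (possibly empty) suffix of $u_k$ or of $v_k$; $\mathcal{W}$ is the set of these $W$-constants. Rules (with $k$ ranging over $\mathcal{N}$, $a$ over $\Sigma$, $W$ over $\mathcal{W}$): $X\stackrel{\lambda_U}{\longrightarrow}D\|G_v$, $X\stackrel{\tau}{\longrightarrow}D$, $Y\stackrel{\tau}{\longrightarrow}D$, $D\stackrel{\tau}{\longrightarrow}D\|G_u$, $D\stackrel{\lambda_D}{\longrightarrow}C$; $G_u\stackrel{\tau}{\longrightarrow}G_uU_k$, $G_u\stackrel{\lambda_U}{\longrightarrow}G_vU_k$, $G_u\stackrel{\tau}{\longrightarrow}G_v'$, $G_v'\stackrel{\tau}{\longrightarrow}G_v'V_k$, $G_v'\stackrel{\tau}{\longrightarrow}Z$; $G_v\stackrel{\tau}{\longrightarrow}G_vV_k$, $G_v\stackrel{\tau}{\longrightarrow}\epsilon$, $G_v\stackrel{\lambda_V}{\longrightarrow}Z$, $Z\stackrel{\tau}{\longrightarrow}\epsilon$,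 $Z\stackrel{\lambda_Z}{\longrightarrow}\epsilon$; $C\stackrel{\lambda_I}{\longrightarrow}I$, $C\stackrel{\lambda_S}{\longrightarrow}S$, $C\stackrel{\tau}{\longrightarrow}C\|G$, $C\stackrel{\tau}{\longrightarrow}C\|G_v$; $G\stackrel{\tau}{\longrightarrow}GU_k$, $G\stackrel{\tau}{\longrightarrow}GV_k$, $G\stackrel{\tau}{\longrightarrow}\epsilon$; $I\stackrel{\lambda_I}{\longrightarrow}C'$, $I\stackrel{k}{\longrightarrow}I$, $S\stackrel{\lambda_S}{\longrightarrow}C'$, $S\stackrel{a}{\longrightarrow}S$, $C'\stackrel{\tau}{\longrightarrow}C'\|G'$, $C'\stackrel{\tau}{\longrightarrow}\epsilon$; $G'\stackrel{\tau}{\longrightarrow}G'U_k$, $G'\stackrel{\tau}{\longrightarrow}G'V_k$, $G'\stackrel{\tau}{\longrightarrow}G'W$, $G'\stackrel{\tau}{\longrightarrow}G_v$, $G'\stackrel{\tau}{\longrightarrow}Z$; $U_k\stackrel{\tau}{\longrightarrow}W(u_k,k)$, $V_k\stackrel{\tau}{\longrightarrow}W(v_k,k)$; $W(a\omega,k)\stackrel{a}{\longrightarrow}W(\omega,k)$, $W(a\omega,0)\stackrel{a}{\longrightarrow}W(\omega,0)$, $W(\omega,k)\stackrel{k}{\longrightarrow}W(\omega,0)$, $W(a\omega,k)\stackrel{\tau}{\longrightarrow}W(\omega,k)$, $W(a\omega,0)\stackrel{\tau}{\longrightarrow}W(\omega,0)$, $W(\omega,k)\stackrel{\tau}{\longrightarrow}W(\omega,0)$,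 $W(\epsilon,0)\stackrel{\tau}{\longrightarrow}\epsilon$. *)

theory Defs
  imports Main "HOL-Library.Sublist"
begin

datatype 'a act = LamU | LamV | LamD | LamI | LamS | LamZ | Num nat | Sym 'a | Tau

datatype 'a const = CX | CY | CZ | CI | CS | CC | CC' | CD | CG | CG' | CGu | CGv | CGv'
  | CU nat | CV nat | CW "'a list" nat

datatype 'a proc = Eps | Const "'a const" | Seq "'a proc" "'a proc" | Par "'a proc" "'a proc"

inductive scong :: "'a proc \<Rightarrow> 'a proc \<Rightarrow> bool" where
  sc_refl: "scong P P"
| sc_sym: "scong P Q \<Longrightarrow> scong Q P"
| sc_trans: "scong P Q \<Longrightarrow> scong Q R \<Longrightarrow> scong P R"
| sc_seq: "scong P P' \<Longrightarrow> scong Q Q' \<Longrightarrow> scong (Seq P Q) (Seq P' Q')"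
| sc_par: "scong P P' \<Longrightarrow> scong Q Q' \<Longrightarrow> scong (Par P Q) (Par P' Q')"
| sc_seq_assoc: "scong (Seq (Seq P Q) R) (Seq P (Seq Q R))"
| sc_par_assoc: "scong (Par (Par P Q) R) (Par P (Par Q R))"
| sc_par_comm: "scong (Par P Q) (Par Q P)"
| sc_seq_unitl: "scong (Seq Eps P) P"
| sc_seq_unitr: "scong (Seq P Eps) P"
| sc_par_unitl: "scong (Par Eps P) P"

definition isW :: "nat \<Rightarrow> (nat \<Rightarrow> 'a list) \<Rightarrow> (nat \<Rightarrow> 'a list) \<Rightarrow> 'a list \<Rightarrow> nat \<Rightarrow> bool" where
  "isW n u v w k \<longleftrightarrow>
     (k \<in> {1..n} \<and> (suffix w (u k) \<or> suffix w (v k))) \<or>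
     (k = 0 \<and> (\<exists>k'\<in>{1..n}. suffix w (u k') \<or> suffix w (v k')))"

inductive grule :: "'a set \<Rightarrow> nat \<Rightarrow> (nat \<Rightarrow> 'a list) \<Rightarrow> (nat \<Rightarrow> 'a list) \<Rightarrow>
    'a const \<Rightarrow> 'a act \<Rightarrow> 'a proc \<Rightarrow> bool"
  for \<Sigma> n u v where
  r1: "grule \<Sigma> n u v CX LamU (Par (Const CD) (Const CGv))"
| r2: "grule \<Sigma> n u v CX Tau (Const CD)"
| r3: "grule \<Sigma> n u v CY Tau (Const CD)"
| r4: "grule \<Sigma> n u v CD Tau (Par (Const CD) (Const CGu))"
| r5: "grule \<Sigma> n u v CD LamD (Const CC)"
| r6: "k \<in> {1..n} \<Longrightarrow> grule \<Sigma> n u v CGu Tau (Seq (Const CGu) (Const (CU k)))"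
| r7: "k \<in> {1..n} \<Longrightarrow> grule \<Sigma> n u v CGu LamU (Seq (Const CGv) (Const (CU k)))"
| r8: "grule \<Sigma> n u v CGu Tau (Const CGv')"
| r9: "k \<in> {1..n} \<Longrightarrow> grule \<Sigma> n u v CGv' Tau (Seq (Const CGv') (Const (CV k)))"
| r10: "grule \<Sigma> n u v CGv' Tau (Const CZ)"
| r11: "k \<in> {1..n} \<Longrightarrow> grule \<Sigma> n u v CGv Tau (Seq (Const CGv) (Const (CV k)))"
| r12: "grule \<Sigma> n u v CGv Tau Eps"
| r13: "grule \<Sigma> n u v CGv LamV (Const CZ)"
| r14: "grule \<Sigma> n u v CZ Tau Eps"
| r15: "grule \<Sigma> n u v CZ LamZ Eps"
| r16: "grule \<Sigma> n u v CC LamI (Const CI)"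
| r17: "grule \<Sigma> n u v CC LamS (Const CS)"
| r18: "grule \<Sigma> n u v CC Tau (Par (Const CC) (Const CG))"
| r19: "grule \<Sigma> n u v CC Tau (Par (Const CC) (Const CGv))"
| r20: "k \<in> {1..n} \<Longrightarrow> grule \<Sigma> n u v CG Tau (Seq (Const CG) (Const (CU k)))"
| r21: "k \<in> {1..n} \<Longrightarrow> grule \<Sigma> n u v CG Tau (Seq (Const CG) (Const (CV k)))"
| r22: "grule \<Sigma> n u v CG Tau Eps"
| r23: "grule \<Sigma> n u v CI LamI (Const CC')"
| r24: "k \<in> {1..n} \<Longrightarrow> grule \<Sigma> n u v CI (Num k) (Const CI)"
| r25: "grule \<Sigma> n u v CS LamS (Const CC')"
| r26: "a \<in> \<Sigma> \<Longrightarrow> grule \<Sigma> n u v CS (Sym a) (Const CS)"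
| r27: "grule \<Sigma> n u v CC' Tau (Par (Const CC') (Const CG'))"
| r28: "grule \<Sigma> n u v CC' Tau Eps"
| r29: "k \<in> {1..n} \<Longrightarrow> grule \<Sigma> n u v CG' Tau (Seq (Const CG') (Const (CU k)))"
| r30: "k \<in> {1..n} \<Longrightarrow> grule \<Sigma> n u v CG' Tau (Seq (Const CG') (Const (CV k)))"
| r31: "isW n u v w k \<Longrightarrow> grule \<Sigma> n u v CG' Tau (Seq (Const CG') (Const (CW w k)))"
| r32: "grule \<Sigma> n u v CG' Tau (Const CGv)"
| r33: "grule \<Sigma> n u v CG' Tau (Const CZ)"
| r34: "k \<in> {1..n} \<Longrightarrow> grule \<Sigma> n u v (CU k) Tau (Const (CW (u k) k))"
| r35: "k \<in> {1..n} \<Longrightarrow> grule \<Sigma> n u v (CV k) Tau (Const (CW (v k) k))"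
| r36: "isW n u v (a # w) k \<Longrightarrow> a \<in> \<Sigma> \<Longrightarrow> grule \<Sigma> n u v (CW (a # w) k) (Sym a) (Const (CW w k))"
| r37: "k \<in> {1..n} \<Longrightarrow> isW n u v w k \<Longrightarrow> grule \<Sigma> n u v (CW w k) (Num k) (Const (CW w 0))"
| r38: "isW n u v (a # w) k \<Longrightarrow> a \<in> \<Sigma> \<Longrightarrow> grule \<Sigma> n u v (CW (a # w) k) Tau (Const (CW w k))"
| r39: "k \<in> {1..n} \<Longrightarrow> isW n u v w k \<Longrightarrow> grule \<Sigma> n u v (CW w k) Tau (Const (CW w 0))"
| r40: "isW n u v [] 0 \<Longrightarrow> grule \<Sigma> n u v (CW [] 0) Tau Eps"

inductive gtrans :: "'a set \<Rightarrow> nat \<Rightarrow> (nat \<Rightarrow> 'a list) \<Rightarrow> (nat \<Rightarrow> 'a list) \<Rightarrow>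
    'a proc \<Rightarrow> 'a act \<Rightarrow> 'a proc \<Rightarrow> bool"
  for \<Sigma> n u v where
  t_rule: "grule \<Sigma> n u v c l P \<Longrightarrow> gtrans \<Sigma> n u v (Const c) l P"
| t_seq: "gtrans \<Sigma> n u v P l P' \<Longrightarrow> gtrans \<Sigma> n u v (Seq P Q) l (Seq P' Q)"
| t_parl: "gtrans \<Sigma> n u v P l P' \<Longrightarrow> gtrans \<Sigma> n u v (Par P Q) l (Par P' Q)"
| t_parr: "gtrans \<Sigma> n u v P l P' \<Longrightarrow> gtrans \<Sigma> n u v (Par Q P) l (Par Q P')"
| t_cong: "scong P P0 \<Longrightarrow> gtrans \<Sigma> n u v P0 l Q0 \<Longrightarrow> scong Q0 Q \<Longrightarrow> gtrans \<Sigma> n u v P l Q"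

definition tau_star where
  "tau_star \<Sigma> n u v = (\<lambda>P Q. gtrans \<Sigma> n u v P Tau Q)\<^sup>*\<^sup>*"

definition weak_step where
  "weak_step \<Sigma> n u v P l Q \<longleftrightarrow>
     (if l = Tau then tau_star \<Sigma> n u v P Q
      else (\<exists>P1 P2. tau_star \<Sigma> n u v P P1 \<and> gtrans \<Sigma> n u v P1 l P2 \<and> tau_star \<Sigma> n u v P2 Q))"

definition weak_bisimulation where
  "weak_bisimulation \<Sigma> n u v R \<longleftrightarrow> (\<forall>P Q. R P Q \<longrightarrow>
     (\<forall>l P'. gtrans \<Sigma> n u v P l P' \<longrightarrow> (\<exists>Q'. weak_step \<Sigma> n u v Q l Q' \<and> R P' Q')) \<and>
     (\<forall>l Q'. gtrans \<Sigma> n u v Q l Q' \<longrightarrow> (\<exists>P'. weak_step \<Sigma> n u v P l P' \<and> R P' Q')))"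

definition weak_bisim where
  "weak_bisim \<Sigma> n u v P Q \<longleftrightarrow> (\<exists>R. weak_bisimulation \<Sigma> n u v R \<and> R P Q)"

definition branching_bisimulation where
  "branching_bisimulation \<Sigma> n u v R \<longleftrightarrow> (\<forall>P Q. R P Q \<longrightarrow>
     (\<forall>l P'. gtrans \<Sigma> n u v P l P' \<longrightarrow>
        (\<exists>Q'' Q'. tau_star \<Sigma> n u v Q Q'' \<and> gtrans \<Sigma> n u v Q'' l Q' \<and> R P Q'' \<and> R P' Q')
        \<or> (l = Tau \<and> R P' Q)) \<and>
     (\<forall>l Q'. gtrans \<Sigma> n u v Q l Q' \<longrightarrow>
        (\<exists>P'' P'. tau_star \<Sigma> n u v P P'' \<and> gtrans \<Sigma> n u v P'' l P' \<and> R P'' Q \<and> R P' Q')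
        \<or> (l = Tau \<and> R P Q')))"

definition branching_bisim where
  "branching_bisim \<Sigma> n u v P Q \<longleftrightarrow> (\<exists>R. branching_bisimulation \<Sigma> n u v R \<and> R P Q)"

definition seqs :: "'a proc list \<Rightarrow> 'a proc" where
  "seqs ps = foldr Seq ps Eps"

end

theory Submission
  imports Defs "HOL-Library.Multiset"
begin

(*
  Both bisimilarities are transferred to the transition system on configurations, i.e. on
  processes modulo structural congruence. The observer I can perform every index action itself and S every letter
  action, so the main thread B P U is distinguished only by the sequence of letters (for I) or
  of indices (for S) that it can still emit, silently or visibly, in order. With an empty head
  a weak bisimulation forces each of these observations to embed into the other; the heads Z
  and G_v add the tests \<lambda>_Z and \<lambda>_V, which can only be answered by a partner whose
  thread is still intact, so again the observations agree. Conversely, the pairs with equal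
  observation, together with all pairs governed by C' (which silently creates and disposes of
  every thread that can occur after \<lambda>_I or \<lambda>_S), form a branching bisimulation.
*)

text \<open>A process is represented modulo structural congruence by its configuration, the multiset
  of its threads, each a sequential composition of constants. Sequential composition of
  configurations is only defined when one side is empty or both consist of a single thread;
  processes such as \<open>(P \<parallel> Q) R\<close>, which never arise below, have no normal form.\<close>

type_synonym 'a config = "'a const list multiset"

definition the_single :: "'a config \<Rightarrow> 'a const list option" where
  "the_single M = (if \<exists>t. M = {#t#} then Some (THE t. M = {#t#}) else None)"

lemma the_single_single [simp]: "the_single {#t#} = Some t"
  by (simp add: the_single_def)

lemma the_single_Some: "the_single M = Some t \<longleftrightarrow> M = {#t#}"
  by (auto simp: the_single_def)

lemma the_single_None: "the_single M = None \<longleftrightarrow> (\<forall>t. M \<noteq> {#t#})"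
  by (auto simp: the_single_def)

definition seq_config :: "'a config \<Rightarrow> 'a config \<Rightarrow> 'a config option" where
  "seq_config M N = (if M = {#} then Some N else if N = {#} then Some M
     else (case the_single M of None \<Rightarrow> None
           | Some s \<Rightarrow> (case the_single N of None \<Rightarrow> None | Some t \<Rightarrow> Some {#s @ t#})))"

definition seq_opt :: "'a config option \<Rightarrow> 'a config option \<Rightarrow> 'a config option" where
  "seq_opt x y = (case x of None \<Rightarrow> None | Some M \<Rightarrow> (case y of None \<Rightarrow> None | Some N \<Rightarrow> seq_config M N))"

definition par_opt :: "'a config option \<Rightarrow> 'a config option \<Rightarrow> 'a config option" where
  "par_opt x y = (case x of None \<Rightarrow> None | Some M \<Rightarrow> (case y of None \<Rightarrow> None | Some N \<Rightarrow> Some (M + N)))"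

fun norm :: "'a proc \<Rightarrow> 'a config option" where
  "norm Eps = Some {#}"
| "norm (Const c) = Some {#[c]#}"
| "norm (Seq P Q) = seq_opt (norm P) (norm Q)"
| "norm (Par P Q) = par_opt (norm P) (norm Q)"

lemma seq_opt_Some [simp]: "seq_opt (Some M) (Some N) = seq_config M N"
  by (simp add: seq_opt_def)

lemma par_opt_Some [simp]: "par_opt (Some M) (Some N) = Some (M + N)"
  by (simp add: par_opt_def)

lemma seq_config_single [simp]: "seq_config {#s#} {#t#} = Some {#s @ t#}"
  by (simp add: seq_config_def the_single_Some)

lemma seq_config_empty [simp]: "seq_config {#} N = Some N" "seq_config M {#} = Some M"
  by (simp_all add: seq_config_def)

lemma seq_config_eq_Some:
  "seq_config M N = Some K \<longleftrightarrow> (M = {#} \<and> K = N) \<or> (N = {#} \<and> K = M) \<or>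
     (\<exists>s t. M = {#s#} \<and> N = {#t#} \<and> K = {#s @ t#})"
  by (auto simp: seq_config_def the_single_Some split: option.splits)

lemma seq_config_assoc:
  "(case seq_config M N of None \<Rightarrow> None | Some K \<Rightarrow> seq_config K L) =
   (case seq_config N L of None \<Rightarrow> None | Some K \<Rightarrow> seq_config M K)"
  by (cases "M = {#}"; cases "N = {#}"; cases "L = {#}")
    (auto simp: seq_config_def the_single_Some the_single_None split: option.splits)

lemma seq_opt_assoc: "seq_opt (seq_opt x y) z = seq_opt x (seq_opt y z)"
proof (cases x; cases y; cases z)
  fix M N L assume "x = Some M" "y = Some N" "z = Some L"
  thus ?thesis using seq_config_assoc[where M=M and N=N and L=L] by (simp add: seq_opt_def split: option.splits)
qed (simp_all add: seq_opt_def split: option.splits)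

lemma norm_scong: "scong P Q \<Longrightarrow> norm P = norm Q"
proof (induction rule: scong.induct)
  case (sc_seq_assoc P Q R) thus ?case by (simp add: seq_opt_assoc)
next
  case (sc_par_comm P Q) thus ?case by (simp add: par_opt_def add.commute split: option.splits)
qed (auto simp: seq_opt_def par_opt_def add.assoc split: option.splits)

definition thread_config :: "'a const list \<Rightarrow> 'a config" where
  "thread_config t = (if t = [] then {#} else {#t#})"

lemma thread_config_Cons [simp]: "thread_config (c # T) = {#c # T#}"
  by (simp add: thread_config_def)

lemma thread_config_inject [simp]: "thread_config x = thread_config y \<longleftrightarrow> x = y"
  by (auto simp: thread_config_def)

lemma seq_config_thread_config:
  "seq_config (thread_config a) (thread_config b) = Some (thread_config (a @ b))"
  by (auto simp: thread_config_def)

fun thread_proc :: "'a const list \<Rightarrow> 'a proc" where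
  "thread_proc [] = Eps"
| "thread_proc (c # r) = Seq (Const c) (thread_proc r)"

lemma norm_thread_proc [simp]: "norm (thread_proc t) = Some (thread_config t)"
  by (induction t) (auto simp: thread_config_def)

lemma seqs_map_Const: "seqs (map Const cs) = thread_proc cs"
  by (induction cs) (auto simp: seqs_def)

lemma grule_norm_defined: "grule \<Sigma> n u v c l R \<Longrightarrow> \<exists>RM. norm R = Some RM"
  by (induction rule: grule.induct) auto

lemma norm_no_empty_thread: "norm P = Some M \<Longrightarrow> [] \<notin># M"
proof (induction P arbitrary: M)
  case (Seq P Q) thus ?case by (auto simp: seq_opt_def seq_config_eq_Some split: option.splits)
next
  case (Par P Q) thus ?case by (auto simp: par_opt_def split: option.splits)
qed auto

lemma gtrans_norm_cases:
  assumes "gtrans \<Sigma> n u v P l Q" "norm P = Some M"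
  shows "\<exists>c rest K R RM. M = add_mset (c # rest) K \<and> grule \<Sigma> n u v c l R \<and> norm R = Some RM
     \<and> norm Q = par_opt (seq_config RM (thread_config rest)) (Some K)"
  using assms
proof (induction arbitrary: M rule: gtrans.induct)
  case (t_rule c l P)
  then obtain RM where "norm P = Some RM" using grule_norm_defined by blast
  thus ?case using t_rule by (auto simp: thread_config_def par_opt_def intro!: exI[of _ c] exI[of _ "[]"])
next
  case (t_seq P l P' Q)
  from t_seq.prems obtain MP MQ where mp: "norm P = Some MP" and mq: "norm Q = Some MQ"
    and sq: "seq_config MP MQ = Some M"
    by (auto simp: seq_opt_def split: option.splits)
  from t_seq.IH[OF mp] obtain c rest K R RM where
    h: "MP = add_mset (c # rest) K" "grule \<Sigma> n u v c l R" "norm R = Some RM"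
       "norm P' = par_opt (seq_config RM (thread_config rest)) (Some K)" by blast
  from sq h(1) consider "MQ = {#}" "M = MP" | t where "MQ = {#t#}" "K = {#}" "M = {#(c # rest) @ t#}"
    by (auto simp: seq_config_eq_Some)
  thus ?case
  proof cases
    case 1 thus ?thesis
      using h mq by (intro exI[of _ c] exI[of _ rest] exI[of _ K] exI[of _ R] exI[of _ RM])
        (auto simp: seq_opt_def par_opt_def split: option.splits)
  next
    case 2
    have "t \<noteq> []" using norm_no_empty_thread[OF mq] 2 by auto
    hence "seq_config (thread_config rest) {#t#} = Some (thread_config (rest @ t))"
      by (auto simp: thread_config_def)
    hence "(case seq_config RM (thread_config rest) of None \<Rightarrow> None | Some K \<Rightarrow> seq_config K {#t#})
        = seq_config RM (thread_config (rest @ t))"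
      using seq_config_assoc[where M=RM and N="thread_config rest" and L="{#t#}"] by simp
    hence "norm (Seq P' Q) = par_opt (seq_config RM (thread_config (rest @ t))) (Some {#})"
      using h(4) 2 mq by (simp add: par_opt_def seq_opt_def split: option.splits)
    thus ?thesis using 2 h(2,3) by auto
  qed
next
  case (t_parl P l P' Q)
  from t_parl.prems obtain MP MQ where mp: "norm P = Some MP" and mq: "norm Q = Some MQ"
    and sq: "M = MP + MQ"
    by (auto simp: par_opt_def split: option.splits)
  from t_parl.IH[OF mp] obtain c rest K R RM where
    h: "MP = add_mset (c # rest) K" "grule \<Sigma> n u v c l R" "norm R = Some RM"
       "norm P' = par_opt (seq_config RM (thread_config rest)) (Some K)" by blast
  show ?case
    using h mq sq by (intro exI[of _ c] exI[of _ rest] exI[of _ "K + MQ"] exI[of _ R] exI[of _ RM])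
      (simp add: par_opt_def split: option.splits)
next
  case (t_parr P l P' Q)
  from t_parr.prems obtain MP MQ where mp: "norm P = Some MP" and mq: "norm Q = Some MQ"
    and sq: "M = MQ + MP"
    by (auto simp: par_opt_def split: option.splits)
  from t_parr.IH[OF mp] obtain c rest K R RM where
    h: "MP = add_mset (c # rest) K" "grule \<Sigma> n u v c l R" "norm R = Some RM"
       "norm P' = par_opt (seq_config RM (thread_config rest)) (Some K)" by blast
  show ?case
    using h mq sq by (intro exI[of _ c] exI[of _ rest] exI[of _ "K + MQ"] exI[of _ R] exI[of _ RM])
      (simp add: par_opt_def split: option.splits)
next
  case (t_cong P P0 l Q0 Q)
  have "norm P0 = Some M" using t_cong norm_scong by metis
  moreover have "norm Q = norm Q0" using t_cong(3) norm_scong by metis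
  ultimately show ?case using t_cong.IH by simp
qed

lemma sc_par_unitr: "scong (Par P Eps) P"
  by (meson sc_par_comm sc_par_unitl sc_trans)

lemma norm_empty_imp_scong_Eps: "norm P = Some {#} \<Longrightarrow> scong P Eps"
proof (induction P)
  case (Seq P Q)
  hence "norm P = Some {#}" "norm Q = Some {#}"
    by (auto simp: seq_opt_def seq_config_eq_Some split: option.splits)
  with Seq show ?case by (meson sc_seq sc_seq_unitl sc_trans)
next
  case (Par P Q)
  hence "norm P = Some {#}" "norm Q = Some {#}" by (auto simp: par_opt_def split: option.splits)
  with Par show ?case by (meson sc_par sc_par_unitl sc_trans)
qed (auto intro: sc_refl)

lemma scong_thread_proc_append: "scong (Seq (thread_proc a) (thread_proc b)) (thread_proc (a @ b))"
proof (induction a)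
  case Nil thus ?case by (simp add: sc_seq_unitl)
next
  case (Cons c a)
  have "scong (Seq (Seq (Const c) (thread_proc a)) (thread_proc b))
      (Seq (Const c) (Seq (thread_proc a) (thread_proc b)))"
    by (rule sc_seq_assoc)
  moreover have "scong (Seq (Const c) (Seq (thread_proc a) (thread_proc b))) (Seq (Const c) (thread_proc (a @ b)))"
    using Cons by (simp add: sc_seq sc_refl)
  ultimately show ?case by (auto intro: sc_trans)
qed

lemma norm_single_imp_scong: "norm P = Some {#t#} \<Longrightarrow> scong P (thread_proc t)"
proof (induction P arbitrary: t)
  case (Const c) thus ?case using sc_sym[OF sc_seq_unitr[of "Const c"]] by auto
next
  case (Seq P Q)
  then obtain MP MQ where mp: "norm P = Some MP" and mq: "norm Q = Some MQ"
    and "seq_config MP MQ = Some {#t#}"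
    by (auto simp: seq_opt_def split: option.splits)
  then consider "MP = {#}" "MQ = {#t#}" | "MQ = {#}" "MP = {#t#}"
    | a b where "MP = {#a#}" "MQ = {#b#}" "t = a @ b"
    by (auto simp: seq_config_eq_Some)
  thus ?case
  proof cases
    case 1 thus ?thesis using Seq mp mq norm_empty_imp_scong_Eps by (meson sc_seq sc_seq_unitl sc_trans)
  next
    case 2 thus ?thesis using Seq mp mq norm_empty_imp_scong_Eps by (meson sc_seq sc_seq_unitr sc_trans)
  next
    case 3 thus ?thesis using Seq mp mq scong_thread_proc_append by (meson sc_seq sc_trans)
  qed
next
  case (Par P Q)
  then obtain MP MQ where mp: "norm P = Some MP" and mq: "norm Q = Some MQ" and "MP + MQ = {#t#}"
    by (auto simp: par_opt_def split: option.splits)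
  then consider "MP = {#}" "MQ = {#t#}" | "MQ = {#}" "MP = {#t#}"
    by (metis single_is_union)
  thus ?case
  proof cases
    case 1 thus ?thesis using Par mp mq norm_empty_imp_scong_Eps by (meson sc_par sc_par_unitl sc_trans)
  next
    case 2 thus ?thesis using Par mp mq norm_empty_imp_scong_Eps by (meson sc_par sc_par_unitr sc_trans)
  qed
qed simp

lemma norm_thread_decomp:
  "norm P = Some M \<Longrightarrow> t \<in># M \<Longrightarrow> \<exists>Pk. scong P (Par (thread_proc t) Pk) \<and> norm Pk = Some (M - {#t#})"
proof (induction P arbitrary: M)
  case (Const c)
  have "scong (Const c) (Par (Seq (Const c) Eps) Eps)"
    by (meson sc_par_unitr sc_seq_unitr sc_sym sc_trans)
  thus ?case using Const by (auto intro!: exI[of _ Eps])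
next
  case (Seq P Q)
  then obtain MP MQ where mp: "norm P = Some MP" and mq: "norm Q = Some MQ"
    and "seq_config MP MQ = Some M"
    by (auto simp: seq_opt_def split: option.splits)
  then consider "MP = {#}" "MQ = M" | "MQ = {#}" "MP = M"
    | a b where "MP = {#a#}" "MQ = {#b#}" "M = {#a @ b#}"
    by (auto simp: seq_config_eq_Some)
  thus ?case
  proof cases
    case 1
    then obtain Pk where "scong Q (Par (thread_proc t) Pk)" "norm Pk = Some (M - {#t#})"
      using Seq mq by blast
    moreover have "scong (Seq P Q) Q"
      using 1 mp norm_empty_imp_scong_Eps by (meson sc_seq sc_refl sc_seq_unitl sc_trans)
    ultimately show ?thesis by (meson sc_trans)
  next
    case 2
    then obtain Pk where "scong P (Par (thread_proc t) Pk)" "norm Pk = Some (M - {#t#})"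
      using Seq mp by blast
    moreover have "scong (Seq P Q) P"
      using 2 mq norm_empty_imp_scong_Eps by (meson sc_seq sc_refl sc_seq_unitr sc_trans)
    ultimately show ?thesis by (meson sc_trans)
  next
    case 3
    have "scong (Seq P Q) (thread_proc (a @ b))"
      using 3 mp mq norm_single_imp_scong scong_thread_proc_append by (meson sc_seq sc_trans)
    moreover have "scong (thread_proc (a @ b)) (Par (thread_proc (a @ b)) Eps)"
      by (meson sc_par_unitr sc_sym)
    ultimately show ?thesis using 3 Seq.prems by (auto intro!: exI[of _ Eps] intro: sc_trans)
  qed
next
  case (Par P Q)
  then obtain MP MQ where mp: "norm P = Some MP" and mq: "norm Q = Some MQ" and sq: "M = MP + MQ"
    by (auto simp: par_opt_def split: option.splits)
  show ?case
  proof (cases "t \<in># MP")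
    case True
    then obtain Pk where h: "scong P (Par (thread_proc t) Pk)" "norm Pk = Some (MP - {#t#})"
      using Par mp by blast
    hence "scong (Par P Q) (Par (Par (thread_proc t) Pk) Q)" by (simp add: sc_par sc_refl)
    hence "scong (Par P Q) (Par (thread_proc t) (Par Pk Q))" by (meson sc_par_assoc sc_trans)
    moreover have "norm (Par Pk Q) = Some (M - {#t#})" using h mq sq True by simp
    ultimately show ?thesis by blast
  next
    case False
    hence "t \<in># MQ" using sq Par.prems by auto
    then obtain Pk where h: "scong Q (Par (thread_proc t) Pk)" "norm Pk = Some (MQ - {#t#})"
      using Par mq by blast
    hence "scong (Par P Q) (Par P (Par (thread_proc t) Pk))" by (simp add: sc_par sc_refl)
    moreover have "scong (Par P (Par (thread_proc t) Pk)) (Par (Par (thread_proc t) Pk) P)"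
      by (rule sc_par_comm)
    ultimately have "scong (Par P Q) (Par (thread_proc t) (Par Pk P))" by (meson sc_par_assoc sc_trans)
    moreover have "norm (Par Pk P) = Some (M - {#t#})" using h mp sq \<open>t \<in># MQ\<close> False
      by (simp add: union_ac)
    ultimately show ?thesis by blast
  qed
qed simp

lemma gtrans_of_thread_head:
  assumes "norm P = Some (add_mset (c # rest) K)" "grule \<Sigma> n u v c l R" "norm R = Some RM"
    "seq_config RM (thread_config rest) = Some G"
  shows "\<exists>Q. gtrans \<Sigma> n u v P l Q \<and> norm Q = Some (G + K)"
proof -
  obtain Pk where h: "scong P (Par (thread_proc (c # rest)) Pk)" "norm Pk = Some K"
    using norm_thread_decomp[OF assms(1), of "c # rest"] by auto
  have "gtrans \<Sigma> n u v (Par (Seq (Const c) (thread_proc rest)) Pk) l (Par (Seq R (thread_proc rest)) Pk)"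
    by (intro t_parl t_seq t_rule assms(2))
  hence "gtrans \<Sigma> n u v P l (Par (Seq R (thread_proc rest)) Pk)"
    using h(1) by (auto intro: t_cong sc_refl)
  moreover have "norm (Par (Seq R (thread_proc rest)) Pk) = Some (G + K)"
    using assms(3,4) h(2) by simp
  ultimately show ?thesis by blast
qed

context
  fixes \<Sigma> :: "'a set" and n :: nat and u v :: "nat \<Rightarrow> 'a list"
begin

definition thread_step :: "'a const \<Rightarrow> 'a act \<Rightarrow> 'a const list \<Rightarrow> 'a config \<Rightarrow> bool" where
  "thread_step c l rest G \<longleftrightarrow>
     (\<exists>R RM. grule \<Sigma> n u v c l R \<and> norm R = Some RM \<and> seq_config RM (thread_config rest) = Some G)"

definition config_step :: "'a config \<Rightarrow> 'a act \<Rightarrow> 'a config \<Rightarrow> bool" where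
  "config_step M l M' \<longleftrightarrow>
     (\<exists>c rest K G. M = add_mset (c # rest) K \<and> thread_step c l rest G \<and> M' = G + K)"

lemma config_stepI: "thread_step c l rest G \<Longrightarrow> config_step (add_mset (c # rest) K) l (G + K)"
  unfolding config_step_def by blast

definition solo_consts :: "'a const set" where
  "solo_consts = {CX, CY, CD, CC, CC', CI, CS}"

text \<open>The rules of the constants in \<^const>\<open>solo_consts\<close> produce parallel compositions; as they
  stand alone in their thread in well-formed configurations, every step leads again to a
  process with a normal form.\<close>

definition wf_config :: "'a config \<Rightarrow> bool" where
  "wf_config M \<longleftrightarrow> (\<forall>t\<in>#M. t \<noteq> [] \<and> (\<forall>x\<in>set t. x \<in> solo_consts \<longrightarrow> t = [x]))"

lemma grule_result_shape:
  "grule \<Sigma> n u v c l R \<Longrightarrow>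
    (c \<in> solo_consts \<longrightarrow> (\<exists>RM. norm R = Some RM \<and> (\<forall>t\<in>#RM. \<exists>x. t = [x]))) \<and>
    (c \<notin> solo_consts \<longrightarrow>
       norm R = Some {#} \<or> (\<exists>t. norm R = Some {#t#} \<and> t \<noteq> [] \<and> set t \<inter> solo_consts = {}))"
  by (induction rule: grule.induct) (auto simp: solo_consts_def)

lemma config_step_wf: "wf_config M \<Longrightarrow> config_step M l M' \<Longrightarrow> wf_config M'"
proof -
  assume w: "wf_config M" and "config_step M l M'"
  then obtain c rest K G R RM where h: "M = add_mset (c # rest) K" "grule \<Sigma> n u v c l R"
    "norm R = Some RM" "seq_config RM (thread_config rest) = Some G" "M' = G + K"
    by (auto simp: config_step_def thread_step_def)
  have "wf_config G"
  proof (cases "c \<in> solo_consts")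
    case True
    hence "rest = []" using w h(1) by (auto simp: wf_config_def)
    hence "G = RM" using h(4) by (simp add: thread_config_def)
    thus ?thesis using grule_result_shape[OF h(2)] True h(3) by (auto simp: wf_config_def)
  next
    case False
    have "set rest \<inter> solo_consts = {}" using w h(1) False by (fastforce simp: wf_config_def)
    with grule_result_shape[OF h(2)] False h(3,4) show ?thesis
      by (auto simp: wf_config_def thread_config_def disjoint_iff split: if_splits)
  qed
  moreover have "wf_config K" using w h(1) by (auto simp: wf_config_def)
  ultimately show ?thesis using h(5) by (auto simp: wf_config_def)
qed

lemma gtrans_imp_config_step:
  assumes "gtrans \<Sigma> n u v P l Q" "norm P = Some M" "wf_config M"
  shows "\<exists>M'. norm Q = Some M' \<and> config_step M l M'"
proof -
  from gtrans_norm_cases[OF assms(1,2)] obtain c rest K R RM where h: "M = add_mset (c # rest) K"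
    "grule \<Sigma> n u v c l R" "norm R = Some RM"
    "norm Q = par_opt (seq_config RM (thread_config rest)) (Some K)" by blast
  have "\<exists>G. seq_config RM (thread_config rest) = Some G"
  proof (cases "c \<in> solo_consts")
    case True
    hence "rest = []" using assms(3) h(1) by (auto simp: wf_config_def)
    thus ?thesis by (simp add: thread_config_def)
  next
    case False
    thus ?thesis using grule_result_shape[OF h(2)] h(3) by (auto simp: thread_config_def)
  qed
  then obtain G where g: "seq_config RM (thread_config rest) = Some G" by blast
  have "config_step M l (G + K)" unfolding config_step_def thread_step_def using h(1-3) g by blast
  thus ?thesis using h(4) g by simp
qed

lemma config_step_imp_gtrans:
  assumes "config_step M l M'" "norm P = Some M"
  shows "\<exists>Q. gtrans \<Sigma> n u v P l Q \<and> norm Q = Some M'"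
  using assms gtrans_of_thread_head by (auto simp: config_step_def thread_step_def) blast

definition config_taus :: "'a config \<Rightarrow> 'a config \<Rightarrow> bool" where
  "config_taus = (\<lambda>M M'. config_step M Tau M')\<^sup>*\<^sup>*"

lemma config_taus_refl [simp]: "config_taus M M"
  by (simp add: config_taus_def)

lemma config_taus_trans [trans]: "config_taus M1 M2 \<Longrightarrow> config_taus M2 M3 \<Longrightarrow> config_taus M1 M3"
  unfolding config_taus_def by (rule rtranclp_trans)

lemma config_taus_step: "config_step M1 Tau M2 \<Longrightarrow> config_taus M2 M3 \<Longrightarrow> config_taus M1 M3"
  unfolding config_taus_def by (rule converse_rtranclp_into_rtranclp)

lemma config_taus_thread_step:
  "thread_step c Tau rest G \<Longrightarrow> config_taus (G + K) M \<Longrightarrow> config_taus (add_mset (c # rest) K) M"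
  using config_taus_step config_stepI by blast

lemma tau_star_imp_config_taus:
  assumes "tau_star \<Sigma> n u v P Q" "norm P = Some M" "wf_config M"
  shows "\<exists>M'. norm Q = Some M' \<and> config_taus M M' \<and> wf_config M'"
  using assms unfolding tau_star_def config_taus_def
proof (induction arbitrary: M rule: rtranclp_induct)
  case (step y z)
  then obtain M1 where "norm y = Some M1" "(\<lambda>M M'. config_step M Tau M')\<^sup>*\<^sup>* M M1" "wf_config M1"
    by blast
  with gtrans_imp_config_step[OF step(2)] config_step_wf show ?case
    by (meson rtranclp.rtrancl_into_rtrancl)
qed auto

lemma config_taus_imp_tau_star:
  assumes "config_taus M M'" "norm P = Some M"
  shows "\<exists>Q. tau_star \<Sigma> n u v P Q \<and> norm Q = Some M'"
  using assms unfolding tau_star_def config_taus_def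
proof (induction arbitrary: P rule: rtranclp_induct)
  case (step y z)
  then obtain Q1 where "(\<lambda>P Q. gtrans \<Sigma> n u v P Tau Q)\<^sup>*\<^sup>* P Q1" "norm Q1 = Some y" by blast
  with config_step_imp_gtrans[OF step(2)] show ?case by (meson rtranclp.rtrancl_into_rtrancl)
qed auto

definition config_weak_step :: "'a config \<Rightarrow> 'a act \<Rightarrow> 'a config \<Rightarrow> bool" where
  "config_weak_step M l M' \<longleftrightarrow>
     (if l = Tau then config_taus M M'
      else (\<exists>M1 M2. config_taus M M1 \<and> config_step M1 l M2 \<and> config_taus M2 M'))"

definition config_weak_bisimulation :: "('a config \<Rightarrow> 'a config \<Rightarrow> bool) \<Rightarrow> bool" where
  "config_weak_bisimulation R \<longleftrightarrow> (\<forall>M N. R M N \<longrightarrow>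
     (\<forall>l M'. config_step M l M' \<longrightarrow> (\<exists>N'. config_weak_step N l N' \<and> R M' N')) \<and>
     (\<forall>l N'. config_step N l N' \<longrightarrow> (\<exists>M'. config_weak_step M l M' \<and> R M' N')))"

definition branching_matches ::
    "('a config \<Rightarrow> 'a config \<Rightarrow> bool) \<Rightarrow> 'a config \<Rightarrow> 'a config \<Rightarrow> 'a act \<Rightarrow> 'a config \<Rightarrow> bool" where
  "branching_matches R M N l M' \<longleftrightarrow>
     (\<exists>N'' N'. config_taus N N'' \<and> config_step N'' l N' \<and> R M N'' \<and> R M' N') \<or> (l = Tau \<and> R M' N)"

lemma branching_matchesI:
  "config_step N l N' \<Longrightarrow> R M N \<Longrightarrow> R M' N' \<Longrightarrow> branching_matches R M N l M'"
  unfolding branching_matches_def by (blast intro: config_taus_refl)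

text \<open>Well-formedness is built in because process steps are only reflected on well-formed
  configurations. Only the first half of the transfer property is required; symmetry of the
  relation is assumed separately where it is used.\<close>

definition config_branching_bisimulation :: "('a config \<Rightarrow> 'a config \<Rightarrow> bool) \<Rightarrow> bool" where
  "config_branching_bisimulation R \<longleftrightarrow> (\<forall>M N. R M N \<longrightarrow> wf_config M \<and> wf_config N \<and>
     (\<forall>l M'. config_step M l M' \<longrightarrow> branching_matches R M N l M'))"

lemma config_weak_bisimulation_converse:
  "config_weak_bisimulation R \<Longrightarrow> config_weak_bisimulation (\<lambda>M N. R N M)"
  unfolding config_weak_bisimulation_def by blast

lemma weak_step_imp_config_weak_step:
  assumes "weak_step \<Sigma> n u v Q l Q'" "norm Q = Some M" "wf_config M"
  shows "\<exists>M'. config_weak_step M l M' \<and> norm Q' = Some M' \<and> wf_config M'"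
proof (cases "l = Tau")
  case True
  thus ?thesis using assms tau_star_imp_config_taus by (simp add: weak_step_def config_weak_step_def) blast
next
  case False
  then obtain P1 P2 where p: "tau_star \<Sigma> n u v Q P1" "gtrans \<Sigma> n u v P1 l P2" "tau_star \<Sigma> n u v P2 Q'"
    using assms(1) by (auto simp: weak_step_def)
  obtain M1 where m1: "norm P1 = Some M1" "config_taus M M1" "wf_config M1"
    using tau_star_imp_config_taus[OF p(1) assms(2,3)] by blast
  obtain M2 where m2: "norm P2 = Some M2" "config_step M1 l M2"
    using gtrans_imp_config_step[OF p(2) m1(1,3)] by blast
  obtain M3 where "norm Q' = Some M3" "config_taus M2 M3" "wf_config M3"
    using tau_star_imp_config_taus[OF p(3) m2(1)] config_step_wf m1(3) m2(2) by blast
  thus ?thesis using False m1 m2 by (auto simp: config_weak_step_def)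
qed

lemma weak_bisim_imp_config_weak_bisimulation:
  assumes "weak_bisim \<Sigma> n u v P Q" "norm P = Some M" "norm Q = Some N" "wf_config M" "wf_config N"
  shows "\<exists>R. config_weak_bisimulation R \<and> R M N"
proof -
  define R where "R = (\<lambda>M N. wf_config M \<and> wf_config N \<and>
    (\<exists>P Q. norm P = Some M \<and> norm Q = Some N \<and> weak_bisim \<Sigma> n u v P Q))"
  have transfer: "\<exists>N'. config_weak_step N l N' \<and> R M' N'"
    if "R M N" and st: "config_step M l M'" for M N l M'
  proof -
    from that(1) obtain P Q where pq: "norm P = Some M" "norm Q = Some N" "weak_bisim \<Sigma> n u v P Q"
      "wf_config M" "wf_config N"
      by (auto simp: R_def)
    then obtain B where B: "weak_bisimulation \<Sigma> n u v B" "B P Q" by (auto simp: weak_bisim_def)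
    obtain P' where p': "gtrans \<Sigma> n u v P l P'" "norm P' = Some M'"
      using config_step_imp_gtrans[OF st pq(1)] by blast
    obtain Q' where q': "weak_step \<Sigma> n u v Q l Q'" "B P' Q'"
      using B p'(1) unfolding weak_bisimulation_def by blast
    obtain N' where "config_weak_step N l N'" "norm Q' = Some N'" "wf_config N'"
      using weak_step_imp_config_weak_step[OF q'(1) pq(2,5)] by blast
    moreover have "wf_config M'" using config_step_wf pq(4) st by blast
    ultimately show ?thesis using p' q' B(1) by (auto simp: R_def weak_bisim_def)
  qed
  have sym: "weak_bisim \<Sigma> n u v Q P" if "weak_bisim \<Sigma> n u v P Q" for P Q
  proof -
    from that obtain B where "weak_bisimulation \<Sigma> n u v B" "B P Q" by (auto simp: weak_bisim_def)
    hence "weak_bisimulation \<Sigma> n u v (\<lambda>P Q. B Q P)" "B P Q"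
      unfolding weak_bisimulation_def by blast+
    thus ?thesis by (auto simp: weak_bisim_def)
  qed
  have "R N M" if "R M N" for M N using that sym by (auto simp: R_def)
  hence "config_weak_bisimulation R"
    unfolding config_weak_bisimulation_def using transfer sym by blast
  moreover have "R M N" using assms by (auto simp: R_def)
  ultimately show ?thesis by blast
qed

lemma config_branching_bisimulation_imp_branching_bisim:
  assumes S: "config_branching_bisimulation S" and sym: "\<And>M N. S M N \<Longrightarrow> S N M"
    and "S M N" "norm P = Some M" "norm Q = Some N"
  shows "branching_bisim \<Sigma> n u v P Q"
proof -
  define R where "R = (\<lambda>P Q. \<exists>M N. norm P = Some M \<and> norm Q = Some N \<and> S M N)"
  have transfer: "(\<exists>Q'' Q'. tau_star \<Sigma> n u v Q Q'' \<and> gtrans \<Sigma> n u v Q'' l Q' \<and> R P Q'' \<and> R P' Q')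
      \<or> (l = Tau \<and> R P' Q)"
    if "R P Q" and st: "gtrans \<Sigma> n u v P l P'" for P Q l P'
  proof -
    from that(1) obtain M N where mn: "norm P = Some M" "norm Q = Some N" "S M N"
      by (auto simp: R_def)
    hence "wf_config M" using S by (auto simp: config_branching_bisimulation_def)
    then obtain M' where m': "norm P' = Some M'" "config_step M l M'"
      using gtrans_imp_config_step[OF st mn(1)] by blast
    from S mn(3) m'(2) consider
        N'' N' where "config_taus N N''" "config_step N'' l N'" "S M N''" "S M' N'"
      | "l = Tau" "S M' N"
      unfolding config_branching_bisimulation_def branching_matches_def by blast
    thus ?thesis
    proof cases
      case 1
      obtain Q'' where q'': "tau_star \<Sigma> n u v Q Q''" "norm Q'' = Some N''"
        using config_taus_imp_tau_star[OF 1(1) mn(2)] by blast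
      obtain Q' where "gtrans \<Sigma> n u v Q'' l Q'" "norm Q' = Some N'"
        using config_step_imp_gtrans[OF 1(2) q''(2)] by blast
      thus ?thesis using q'' 1 mn m' by (auto simp: R_def)
    next
      case 2 thus ?thesis using mn m' by (auto simp: R_def)
    qed
  qed
  have "R Q P" if "R P Q" for P Q using that sym by (auto simp: R_def)
  hence "branching_bisimulation \<Sigma> n u v R"
    unfolding branching_bisimulation_def using transfer by blast
  thus ?thesis using assms(3-5) by (auto simp: branching_bisim_def R_def)
qed

lemma branching_transfer_imp_weak_step:
  "tau_star \<Sigma> n u v Q Q'' \<Longrightarrow> gtrans \<Sigma> n u v Q'' l Q' \<Longrightarrow> weak_step \<Sigma> n u v Q l Q'"
  unfolding weak_step_def tau_star_def by (auto intro: rtranclp.rtrancl_into_rtrancl)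

lemma branching_bisim_imp_weak_bisim:
  assumes "branching_bisim \<Sigma> n u v P Q"
  shows "weak_bisim \<Sigma> n u v P Q"
proof -
  obtain R where R: "branching_bisimulation \<Sigma> n u v R" "R P Q"
    using assms by (auto simp: branching_bisim_def)
  have tau: "weak_step \<Sigma> n u v Q Tau Q" for Q by (simp add: weak_step_def tau_star_def)
  have "weak_bisimulation \<Sigma> n u v R"
    unfolding weak_bisimulation_def
  proof (intro allI impI conjI)
    fix P Q l P' assume "R P Q" "gtrans \<Sigma> n u v P l P'"
    with R(1) show "\<exists>Q'. weak_step \<Sigma> n u v Q l Q' \<and> R P' Q'"
      unfolding branching_bisimulation_def using branching_transfer_imp_weak_step tau by metis
  next
    fix P Q l Q' assume "R P Q" "gtrans \<Sigma> n u v Q l Q'"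
    with R(1) show "\<exists>P'. weak_step \<Sigma> n u v P l P' \<and> R P' Q'"
      unfolding branching_bisimulation_def using branching_transfer_imp_weak_step tau by metis
  qed
  thus ?thesis using R(2) by (auto simp: weak_bisim_def)
qed

lemma seq_config_thread_config_simps [simp]:
  "seq_config {#[x]#} (thread_config rest) = Some {#x # rest#}"
  "seq_config {#[x, y]#} (thread_config rest) = Some {#x # y # rest#}"
  "seq_config {#[x], [y]#} (thread_config rest) = (if rest = [] then Some {#[x], [y]#} else None)"
  by (auto simp: thread_config_def seq_config_def the_single_def)

lemma thread_stepI:
  "grule \<Sigma> n u v c l R \<Longrightarrow> norm R = Some RM \<Longrightarrow> seq_config RM (thread_config rest) = Some G \<Longrightarrow>
    thread_step c l rest G"
  unfolding thread_step_def by blast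

lemma thread_step_indexed_intros:
  "k \<in> {1..n} \<Longrightarrow> thread_step CI (Num k) rest {#CI # rest#}"
  "k \<in> {1..n} \<Longrightarrow> thread_step CG' Tau rest {#CG' # CU k # rest#}"
  "k \<in> {1..n} \<Longrightarrow> thread_step CG' Tau rest {#CG' # CV k # rest#}"
  "k \<in> {1..n} \<Longrightarrow> thread_step CGv Tau rest {#CGv # CV k # rest#}"
  by (rule thread_stepI, erule grule.intros, simp, simp)+

lemmas thread_step_intros =
  thread_stepI grule.intros[simplified] thread_step_indexed_intros[simplified]

lemma thread_step_CI:
  "thread_step CI l rest G \<longleftrightarrow>
     (l = LamI \<and> G = {#CC' # rest#}) \<or> (\<exists>k\<in>{1..n}. l = Num k \<and> G = {#CI # rest#})"
  apply (rule iffI)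
  subgoal unfolding thread_step_def grule.simps[of \<Sigma> n u v CI] by (fastforce split: if_splits)
  by (auto intro: thread_step_intros)

lemma thread_step_CS:
  "thread_step CS l rest G \<longleftrightarrow>
     (l = LamS \<and> G = {#CC' # rest#}) \<or> (\<exists>a\<in>\<Sigma>. l = Sym a \<and> G = {#CS # rest#})"
  apply (rule iffI)
  subgoal unfolding thread_step_def grule.simps[of \<Sigma> n u v CS] by (fastforce split: if_splits)
  by (auto intro: thread_step_intros)

lemma thread_step_CC':
  "thread_step CC' l rest G \<longleftrightarrow>
     l = Tau \<and> ((rest = [] \<and> G = {#[CC'], [CG']#}) \<or> G = thread_config rest)"
  apply (rule iffI)
  subgoal unfolding thread_step_def grule.simps[of \<Sigma> n u v CC'] by (fastforce split: if_splits)
  by (auto intro: thread_step_intros)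

lemma thread_step_CG':
  "thread_step CG' l rest G \<longleftrightarrow>
     l = Tau \<and> ((\<exists>k\<in>{1..n}. G = {#CG' # CU k # rest#} \<or> G = {#CG' # CV k # rest#}) \<or>
       (\<exists>w k. isW n u v w k \<and> G = {#CG' # CW w k # rest#}) \<or> G = {#CGv # rest#} \<or> G = {#CZ # rest#})"
  apply (rule iffI)
  subgoal unfolding thread_step_def grule.simps[of \<Sigma> n u v CG'] by (fastforce split: if_splits)
  by (auto intro: thread_step_intros)

lemma thread_step_CGv:
  "thread_step CGv l rest G \<longleftrightarrow>
     (l = Tau \<and> (\<exists>k\<in>{1..n}. G = {#CGv # CV k # rest#})) \<or> (l = Tau \<and> G = thread_config rest) \<or>
     (l = LamV \<and> G = {#CZ # rest#})"
  apply (rule iffI)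
  subgoal unfolding thread_step_def grule.simps[of \<Sigma> n u v CGv] by (fastforce split: if_splits)
  by (auto intro: thread_step_intros)

lemma thread_step_CZ:
  "thread_step CZ l rest G \<longleftrightarrow>
     (l = Tau \<or> l = LamZ) \<and> G = thread_config rest"
  apply (rule iffI)
  subgoal unfolding thread_step_def grule.simps[of \<Sigma> n u v CZ] by (fastforce split: if_splits)
  by (auto intro: thread_step_intros)

lemma thread_step_CU:
  "thread_step (CU k) l rest G \<longleftrightarrow>
     k \<in> {1..n} \<and> l = Tau \<and> G = {#CW (u k) k # rest#}"
  apply (rule iffI)
  subgoal unfolding thread_step_def grule.simps[of \<Sigma> n u v "CU k"] by (fastforce split: if_splits)
  by (auto intro: thread_step_intros)

lemma thread_step_CV:
  "thread_step (CV k) l rest G \<longleftrightarrow>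
     k \<in> {1..n} \<and> l = Tau \<and> G = {#CW (v k) k # rest#}"
  apply (rule iffI)
  subgoal unfolding thread_step_def grule.simps[of \<Sigma> n u v "CV k"] by (fastforce split: if_splits)
  by (auto intro: thread_step_intros)

lemma thread_step_CW:
  "thread_step (CW w k) l rest G \<longleftrightarrow>
     (\<exists>a w'. w = a # w' \<and> isW n u v w k \<and> a \<in> \<Sigma> \<and> (l = Sym a \<or> l = Tau) \<and> G = {#CW w' k # rest#}) \<or>
     (k \<in> {1..n} \<and> isW n u v w k \<and> (l = Num k \<or> l = Tau) \<and> G = {#CW w 0 # rest#}) \<or>
     (w = [] \<and> k = 0 \<and> isW n u v [] 0 \<and> l = Tau \<and> G = thread_config rest)"
  apply (rule iffI)
  subgoal unfolding thread_step_def grule.simps[of \<Sigma> n u v "CW w k"] by (fastforce split: if_splits)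
  by (auto intro: thread_step_intros)

end

locale pcp_instance =
  fixes \<Sigma> :: "'a set" and n :: nat and u v :: "nat \<Rightarrow> 'a list"
  assumes words_wf: "\<forall>k\<in>{1..n}. u k \<noteq> [] \<and> set (u k) \<subseteq> \<Sigma> \<and> v k \<noteq> [] \<and> set (v k) \<subseteq> \<Sigma>"
begin

abbreviation "cstep \<equiv> config_step \<Sigma> n u v"
abbreviation "ctaus \<equiv> config_taus \<Sigma> n u v"
abbreviation "tstep \<equiv> thread_step \<Sigma> n u v"

lemma isW_Cons_mem: "isW n u v (a # w) k \<Longrightarrow> a \<in> \<Sigma>"
  using words_wf unfolding isW_def by (auto dest!: set_mono_suffix; metis atLeastAtMost_iff subsetD)

lemma isW_Cons_tl: "isW n u v (a # w) k \<Longrightarrow> isW n u v w k"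
  unfolding isW_def by (meson suffix_ConsD)

lemma isW_index_0: "isW n u v w k \<Longrightarrow> k \<in> {1..n} \<Longrightarrow> isW n u v w 0"
  unfolding isW_def by auto

lemma isW_Nil_0: "isW n u v w k \<Longrightarrow> isW n u v [] 0"
  unfolding isW_def by auto

lemma isW_index: "isW n u v w k \<Longrightarrow> k \<noteq> 0 \<Longrightarrow> k \<in> {1..n}"
  unfolding isW_def by auto

lemma isW_u: "k \<in> {1..n} \<Longrightarrow> isW n u v (u k) k"
  unfolding isW_def by auto

lemma isW_v: "k \<in> {1..n} \<Longrightarrow> isW n u v (v k) k"
  unfolding isW_def by auto

definition valid_const :: "'a const \<Rightarrow> bool" where
  "valid_const c \<longleftrightarrow> (\<exists>k\<in>{1..n}. c = CU k \<or> c = CV k) \<or> (\<exists>w k. c = CW w k \<and> isW n u v w k)"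

abbreviation valid_thread :: "'a const list \<Rightarrow> bool" where
  "valid_thread T \<equiv> \<forall>c\<in>set T. valid_const c"

lemma valid_const_cases [consumes 1]:
  assumes "valid_const c"
  obtains (U) k where "k \<in> {1..n}" "c = CU k" | (V) k where "k \<in> {1..n}" "c = CV k"
    | (W) w k where "c = CW w k" "isW n u v w k"
  using assms unfolding valid_const_def by blast

lemma valid_const_intros:
  "k \<in> {1..n} \<Longrightarrow> valid_const (CU k)" "k \<in> {1..n} \<Longrightarrow> valid_const (CV k)"
  "isW n u v w k \<Longrightarrow> valid_const (CW w k)"
  by (auto simp: valid_const_def)

lemma valid_const_not_solo: "valid_const c \<Longrightarrow> c \<notin> solo_consts"
  by (auto simp: valid_const_def solo_consts_def)

text \<open>The threads that \<open>C'\<close> can both create (via \<open>G'\<close>) and dispose of silently.\<close>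

definition disposable :: "'a const list \<Rightarrow> bool" where
  "disposable t \<longleftrightarrow> t \<noteq> [] \<and>
     (\<exists>h T. t = h @ T \<and> h \<in> {[], [CZ], [CGv], [CG']} \<and> valid_thread T)"

lemma ctaus_W_vanish: "isW n u v w k \<Longrightarrow> ctaus (add_mset (CW w k # rest) K) (thread_config rest + K)"
proof (induction w arbitrary: k)
  case Nil
  have "ctaus (add_mset (CW [] 0 # rest) K) (thread_config rest + K)"
    using isW_Nil_0[OF Nil] by (intro config_taus_thread_step[where G="thread_config rest"])
      (auto simp: thread_step_CW)
  thus ?case
    using Nil isW_index[OF Nil]
    by (cases "k = 0") (auto intro: config_taus_thread_step[where G="{#CW [] 0 # rest#}"] simp: thread_step_CW)
next
  case (Cons a w)
  thus ?case using isW_Cons_tl isW_Cons_mem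
    by (intro config_taus_thread_step[where G="{#CW w k # rest#}"]) (auto simp: thread_step_CW)
qed

lemma ctaus_valid_const_vanish:
  assumes "valid_const c"
  shows "ctaus (add_mset (c # rest) K) (thread_config rest + K)"
  using assms
proof (cases rule: valid_const_cases)
  case (U k) thus ?thesis using ctaus_W_vanish[OF isW_u[OF U(1)]]
    by (intro config_taus_thread_step[where G="{#CW (u k) k # rest#}"]) (auto simp: thread_step_CU)
next
  case (V k) thus ?thesis using ctaus_W_vanish[OF isW_v[OF V(1)]]
    by (intro config_taus_thread_step[where G="{#CW (v k) k # rest#}"]) (auto simp: thread_step_CV)
qed (simp add: ctaus_W_vanish)

lemma ctaus_valid_thread_vanish: "valid_thread T \<Longrightarrow> ctaus (thread_config T + K) K"
proof (induction T)
  case (Cons c T)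
  thus ?case using ctaus_valid_const_vanish config_taus_trans by fastforce
qed (simp add: thread_config_def)

lemma ctaus_disposable_vanish: "disposable t \<Longrightarrow> ctaus (add_mset t K) K"
proof -
  assume "disposable t"
  then obtain h T where t: "t = h @ T" "h \<in> {[], [CZ], [CGv], [CG']}" "valid_thread T" "t \<noteq> []"
    by (auto simp: disposable_def)
  have T: "ctaus (thread_config T + K) K" using ctaus_valid_thread_vanish t(3) by blast
  have Z: "ctaus (add_mset (CZ # T) K) K"
    by (rule config_taus_thread_step[where G="thread_config T"]) (auto simp: thread_step_CZ T)
  have "ctaus (add_mset (CGv # T) K) K"
    by (rule config_taus_thread_step[where G="thread_config T"]) (auto simp: thread_step_CGv T)
  moreover have "ctaus (add_mset (CG' # T) K) K"
    by (rule config_taus_thread_step[where G="{#CZ # T#}"]) (auto simp: thread_step_CG' Z)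
  ultimately show ?thesis using t T Z by (auto simp: thread_config_def)
qed

lemma ctaus_G'_grow: "valid_thread T \<Longrightarrow> ctaus (add_mset [CG'] K) (add_mset (CG' # T) K)"
proof (induction T)
  case (Cons c T)
  have "tstep CG' Tau T {#CG' # c # T#}"
    using Cons.prems by (auto simp: thread_step_CG' valid_const_def)
  from config_stepI[OF this, of K]
  have "ctaus (add_mset (CG' # T) K) (add_mset (CG' # c # T) K)"
    using config_taus_step[OF _ config_taus_refl] by simp
  thus ?case using Cons config_taus_trans by auto
qed simp

lemma ctaus_C'_spawn:
  assumes "disposable t"
  shows "ctaus (add_mset [CC'] K) (add_mset [CC'] (add_mset t K))"
proof -
  from assms obtain h T where t: "t = h @ T" "h \<in> {[], [CZ], [CGv], [CG']}" "valid_thread T" "t \<noteq> []"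
    by (auto simp: disposable_def)
  let ?K = "add_mset [CC'] K"
  have "cstep ?K Tau ({#[CC'], [CG']#} + K)"
    using config_stepI[where c=CC' and l=Tau and rest="[]" and G="{#[CC'], [CG']#}" and K=K]
    by (simp add: thread_step_CC')
  hence "ctaus ?K (add_mset [CG'] ?K)"
    using config_taus_step[OF _ config_taus_refl] by (simp add: add_mset_commute)
  also have "ctaus \<dots> (add_mset (CG' # T) ?K)"
    using ctaus_G'_grow t(3) by blast
  also have "ctaus \<dots> (add_mset t ?K)"
  proof -
    have Z: "ctaus (add_mset (CG' # T) ?K) (add_mset (CZ # T) ?K)"
      by (rule config_taus_thread_step[where G="{#CZ # T#}"]) (auto simp: thread_step_CG' add_mset_commute)
    have "ctaus (add_mset (CZ # T) ?K) (add_mset T ?K)" if "T \<noteq> []"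
      using that by (intro config_taus_thread_step[where G="thread_config T"])
        (auto simp: thread_step_CZ thread_config_def add_mset_commute)
    moreover have "ctaus (add_mset (CG' # T) ?K) (add_mset (CGv # T) ?K)"
      by (rule config_taus_thread_step[where G="{#CGv # T#}"]) (auto simp: thread_step_CG' add_mset_commute)
    ultimately show ?thesis using t Z config_taus_trans by auto
  qed
  finally show ?thesis by (simp add: add_mset_commute)
qed

lemma ctaus_C'_dispose_all:
  "\<forall>t\<in>#K. disposable t \<Longrightarrow> ctaus (add_mset [CC'] (K + L)) (add_mset [CC'] L)"
proof (induction K)
  case (add t K)
  have "ctaus (add_mset t (add_mset [CC'] (K + L))) (add_mset [CC'] (K + L))"
    using ctaus_disposable_vanish add.prems by simp
  thus ?case using add config_taus_trans by (simp add: add_mset_commute)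
qed simp

lemma ctaus_C'_spawn_all:
  "\<forall>t\<in>#K. disposable t \<Longrightarrow> ctaus (add_mset [CC'] L) (add_mset [CC'] (K + L))"
proof (induction K)
  case (add t K)
  thus ?case using ctaus_C'_spawn config_taus_trans by fastforce
qed simp

lemma ctaus_C'_configs:
  "\<forall>t\<in>#K. disposable t \<Longrightarrow> \<forall>t\<in>#K'. disposable t \<Longrightarrow> ctaus (add_mset [CC'] K) (add_mset [CC'] K')"
  using ctaus_C'_dispose_all[of K "{#}"] ctaus_C'_spawn_all[of K' "{#}"] config_taus_trans by auto

fun word_of :: "'a const \<Rightarrow> 'a list" where
  "word_of (CU k) = u k" | "word_of (CV k) = v k" | "word_of (CW w k) = w" | "word_of _ = []"

text \<open>A thread is observed through the letters it can still emit when the observer is \<open>I\<close>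
  (\<open>letters = True\<close>), and through the indices it can still emit when the observer is \<open>S\<close>;
  the constant \<open>W(w,0)\<close> has already emitted its index.\<close>

definition obs :: "bool \<Rightarrow> 'a const \<Rightarrow> ('a + nat) list" where
  "obs letters c = (if letters then map Inl (word_of c) else
     (case c of CU k \<Rightarrow> [Inr k] | CV k \<Rightarrow> [Inr k] | CW w k \<Rightarrow> (if k = 0 then [] else [Inr k]) | _ \<Rightarrow> []))"

definition obs_thread :: "bool \<Rightarrow> 'a const list \<Rightarrow> ('a + nat) list" where
  "obs_thread letters T = concat (map (obs letters) T)"

lemma obs_thread_simps [simp]:
  "obs_thread letters [] = []"
  "obs_thread letters (c # T) = obs letters c @ obs_thread letters T"
  "obs_thread letters (T1 @ T2) = obs_thread letters T1 @ obs_thread letters T2"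
  by (auto simp: obs_thread_def)

definition observer :: "bool \<Rightarrow> 'a const" where
  "observer letters = (if letters then CI else CS)"

fun obs_act :: "('a + nat) \<Rightarrow> 'a act" where
  "obs_act (Inl a) = Sym a" | "obs_act (Inr k) = Num k"

definition observable :: "bool \<Rightarrow> ('a + nat) \<Rightarrow> bool" where
  "observable letters b \<longleftrightarrow> letters = isl b"

lemma obs_act_neq [simp]:
  "obs_act b \<noteq> Tau" "obs_act b \<noteq> LamZ" "obs_act b \<noteq> LamV"
  "Tau \<noteq> obs_act b" "LamZ \<noteq> obs_act b" "LamV \<noteq> obs_act b"
  by (cases b; simp)+

lemma obs_act_inject [simp]: "obs_act b = obs_act b' \<longleftrightarrow> b = b'"
  by (cases b; cases b'; simp)

lemma obs_thread_observable: "b \<in> set (obs_thread letters T) \<Longrightarrow> observable letters b"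
  by (induction T) (auto simp: obs_def observable_def split: const.splits if_splits)

abbreviation test_heads :: "'a const list set" where
  "test_heads \<equiv> {[], [CZ], [CGv]}"

text \<open>The configuration of \<open>I \<parallel> h T\<close> or \<open>S \<parallel> h T\<close>; the head \<open>h\<close> is the \<open>B\<close> of the theorem.\<close>

definition state :: "bool \<Rightarrow> 'a const list \<Rightarrow> 'a const list \<Rightarrow> 'a config" where
  "state letters h T = add_mset [observer letters] (thread_config (h @ T))"

lemma state_inject [simp]: "state letters h T = state letters h T' \<longleftrightarrow> T = T'"
proof
  assume "state letters h T = state letters h T'"
  hence "thread_config (h @ T) = thread_config (h @ T')" by (simp add: state_def)
  thus "T = T'" by simp
qed simp

lemma state_Cons: "state letters [] (c # T) = add_mset (c # T) {#[observer letters]#}"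
  by (simp add: state_def add_mset_commute)

lemma wf_state: "h \<in> test_heads \<Longrightarrow> valid_thread T \<Longrightarrow> wf_config (state letters h T)"
proof -
  assume "h \<in> test_heads" "valid_thread T"
  hence "\<forall>x\<in>set (h @ T). x \<notin> solo_consts" using valid_const_not_solo by (auto simp: solo_consts_def)
  moreover have "observer letters \<in> solo_consts" by (simp add: solo_consts_def observer_def)
  ultimately show ?thesis by (auto simp: wf_config_def thread_config_def state_def)
qed

lemma observable_obs_act:
  "observable True b \<Longrightarrow> \<exists>a. obs_act b = Sym a" "observable False b \<Longrightarrow> \<exists>k. obs_act b = Num k"
  by (cases b; simp add: observable_def)+

lemma thread_step_observer:
  assumes "tstep (observer letters) l [] G"
  shows "(G = {#[CC']#} \<or> G = {#[observer letters]#}) \<and> l \<noteq> Tau \<and> l \<noteq> LamZ \<and> l \<noteq> LamV \<and>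
    (\<forall>b. observable letters b \<longrightarrow> l \<noteq> obs_act b)"
proof (cases letters)
  case True
  with assms consider "l = LamI" "G = {#[CC']#}" | k where "l = Num k" "G = {#[CI]#}"
    by (auto simp: observer_def thread_step_CI)
  thus ?thesis using True observable_obs_act(1) by cases (fastforce simp: observer_def)+
next
  case False
  with assms consider "l = LamS" "G = {#[CC']#}" | a where "l = Sym a" "G = {#[CS]#}"
    by (auto simp: observer_def thread_step_CS)
  thus ?thesis using False observable_obs_act(2) by cases (fastforce simp: observer_def)+
qed

lemma add_mset_eq_add_mset_thread_config:
  "add_mset (c # rest) K = add_mset [x] (thread_config t) \<Longrightarrow>
    (c = x \<and> rest = [] \<and> K = thread_config t) \<or> (c # rest = t \<and> K = {#[x]#})"
  by (auto simp: add_eq_conv_ex thread_config_def split: if_splits)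

lemma cstep_state_cases:
  assumes "cstep (state letters h T) l X"
  obtains (observer) G where "tstep (observer letters) l [] G" "X = G + thread_config (h @ T)"
    | (thread) c rest G where "h @ T = c # rest" "tstep c l rest G" "X = G + {#[observer letters]#}"
proof -
  from assms obtain c rest K G where
    st: "state letters h T = add_mset (c # rest) K" "tstep c l rest G" "X = G + K"
    unfolding config_step_def by blast
  hence split: "(c = observer letters \<and> rest = [] \<and> K = thread_config (h @ T)) \<or>
      (c # rest = h @ T \<and> K = {#[observer letters]#})"
    using add_mset_eq_add_mset_thread_config[of c rest K "observer letters" "h @ T"]
    by (simp add: state_def)
  show ?thesis
  proof (cases "c = observer letters \<and> rest = [] \<and> K = thread_config (h @ T)")
    case True thus ?thesis using st by (intro observer[of G]) auto
  next
    case False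
    hence "h @ T = c # rest" "K = {#[observer letters]#}" using split by auto
    thus ?thesis using st by (intro thread[of c rest G]) auto
  qed
qed

lemma valid_thread_step:
  assumes "valid_const c" "valid_thread rest" "tstep c l rest G"
  shows "\<exists>T'. G = thread_config T' \<and> valid_thread T' \<and>
    ((obs_thread letters T' = obs_thread letters (c # rest) \<and>
        (l = Tau \<or> tstep (observer letters) l [] {#[observer letters]#})) \<or>
     (\<exists>b. obs_thread letters (c # rest) = b # obs_thread letters T' \<and> (l = Tau \<or> l = obs_act b)))"
  using assms(1)
proof (cases rule: valid_const_cases)
  case (U k)
  hence "l = Tau" "G = thread_config (CW (u k) k # rest)" using assms(3) by (auto simp: thread_step_CU)
  moreover have "obs letters (CW (u k) k) = obs letters c" using U by (auto simp: obs_def)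
  ultimately show ?thesis using assms(2) valid_const_intros(3)[OF isW_u[OF U(1)]]
    by (intro exI[of _ "CW (u k) k # rest"]) auto
next
  case (V k)
  hence "l = Tau" "G = thread_config (CW (v k) k # rest)" using assms(3) by (auto simp: thread_step_CV)
  moreover have "obs letters (CW (v k) k) = obs letters c" using V by (auto simp: obs_def)
  ultimately show ?thesis using assms(2) valid_const_intros(3)[OF isW_v[OF V(1)]]
    by (intro exI[of _ "CW (v k) k # rest"]) auto
next
  case (W w k)
  from assms(3) W consider
      (letter) a w' where "w = a # w'" "a \<in> \<Sigma>" "l = Sym a \<or> l = Tau" "G = thread_config (CW w' k # rest)"
    | (index) "k \<in> {1..n}" "l = Num k \<or> l = Tau" "G = thread_config (CW w 0 # rest)"
    | (vanish) "w = []" "k = 0" "l = Tau" "G = thread_config rest"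
    by (auto simp: thread_step_CW)
  thus ?thesis
  proof cases
    case letter
    have "valid_thread (CW w' k # rest)" using assms(2) W letter isW_Cons_tl valid_const_intros by auto
    moreover have "tstep CS (Sym a) [] {#[CS]#}" using letter(2) by (simp add: thread_step_CS)
    ultimately show ?thesis using W letter
      by (intro exI[of _ "CW w' k # rest"]) (cases letters; auto simp: obs_def observer_def)
  next
    case index
    have "valid_thread (CW w 0 # rest)" using assms(2) W index isW_index_0 valid_const_intros by auto
    moreover have "tstep CI (Num k) [] {#[CI]#}" using index(1) by (simp add: thread_step_CI)
    ultimately show ?thesis using W index
      by (intro exI[of _ "CW w 0 # rest"]) (cases letters; auto simp: obs_def observer_def)
  next
    case vanish
    thus ?thesis using assms(2) W by (intro exI[of _ rest]) (auto simp: obs_def)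
  qed
qed

lemma cstep_state_Nil:
  assumes "valid_thread T" "cstep (state letters [] T) l X"
  shows "(l = Tau \<longrightarrow> (\<exists>T'. X = state letters [] T' \<and> valid_thread T' \<and>
            suffix (obs_thread letters T') (obs_thread letters T))) \<and>
         (\<forall>b. observable letters b \<longrightarrow> l = obs_act b \<longrightarrow>
            (\<exists>T'. X = state letters [] T' \<and> valid_thread T' \<and>
               suffix (b # obs_thread letters T') (obs_thread letters T))) \<and>
         l \<noteq> LamZ \<and> l \<noteq> LamV"
  using assms(2)
proof (cases rule: cstep_state_cases)
  case observer
  thus ?thesis using thread_step_observer[OF observer(1)] by simp
next
  case (thread c rest G)
  with assms(1) obtain T' where T': "G = thread_config T'" "valid_thread T'" and
    obs: "(obs_thread letters T' = obs_thread letters T \<and>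
            (l = Tau \<or> tstep (observer letters) l [] {#[observer letters]#})) \<or>
          (\<exists>b. obs_thread letters T = b # obs_thread letters T' \<and> (l = Tau \<or> l = obs_act b))"
    using valid_thread_step[of c rest l G letters] by auto
  have X: "X = state letters [] T'" using thread(3) T'(1) by (simp add: state_def)
  from obs show ?thesis
  proof
    assume eq: "obs_thread letters T' = obs_thread letters T \<and>
        (l = Tau \<or> tstep (observer letters) l [] {#[observer letters]#})"
    hence "l = Tau \<or> (l \<noteq> LamZ \<and> l \<noteq> LamV \<and> (\<forall>b. observable letters b \<longrightarrow> l \<noteq> obs_act b))"
      using thread_step_observer[of letters l] by blast
    thus ?thesis using X T'(2) eq by auto
  next
    assume "\<exists>b. obs_thread letters T = b # obs_thread letters T' \<and> (l = Tau \<or> l = obs_act b)"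
    thus ?thesis using X T'(2) by (auto intro: suffix_ConsI)
  qed
qed

lemma cstep_state_Z: "cstep (state letters [CZ] T) l X \<Longrightarrow> l = Tau \<or> l = LamZ \<Longrightarrow> X = state letters [] T"
  by (erule cstep_state_cases) (auto dest: thread_step_observer simp: thread_step_CZ state_def)

lemma cstep_state_Z_to_Nil: "l = Tau \<or> l = LamZ \<Longrightarrow> cstep (state letters [CZ] T) l (state letters [] T)"
  using config_stepI[where c=CZ and l=l and rest=T and G="thread_config T" and K="{#[observer letters]#}"]
  by (simp add: thread_step_CZ state_def add_mset_commute)

lemma cstep_state_Gv:
  assumes "cstep (state letters [CGv] T) l X"
  shows "(l = Tau \<longrightarrow> X = state letters [] T \<or> (\<exists>k\<in>{1..n}. X = state letters [CGv] (CV k # T))) \<and>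
    (l = LamV \<longrightarrow> X = state letters [CZ] T)"
  using assms by (cases rule: cstep_state_cases)
    (auto dest: thread_step_observer simp: thread_step_CGv state_def)

lemma cstep_state_Gv_LamV: "cstep (state letters [CGv] T) LamV (state letters [CZ] T)"
  using config_stepI[where c=CGv and l=LamV and rest=T and G="{#CZ # T#}" and K="{#[observer letters]#}"]
  by (simp add: thread_step_CGv state_def add_mset_commute)

lemma ctaus_state_Nil:
  "ctaus (state letters [] T) X \<Longrightarrow> valid_thread T \<Longrightarrow>
    \<exists>T'. X = state letters [] T' \<and> valid_thread T' \<and> suffix (obs_thread letters T') (obs_thread letters T)"
  unfolding config_taus_def
proof (induction rule: rtranclp_induct)
  case (step y z)
  then obtain T' where "y = state letters [] T'" "valid_thread T'"
    "suffix (obs_thread letters T') (obs_thread letters T)" by blast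
  with cstep_state_Nil[of T' letters Tau z] step(2) show ?case by (meson suffix_order.trans)
qed auto

lemma ctaus_state_Z:
  "ctaus (state letters [CZ] T) X \<Longrightarrow> valid_thread T \<Longrightarrow>
    X = state letters [CZ] T \<or>
    (\<exists>T'. X = state letters [] T' \<and> valid_thread T' \<and> suffix (obs_thread letters T') (obs_thread letters T))"
  unfolding config_taus_def
proof (induction rule: rtranclp_induct)
  case (step y z)
  from step.IH step.prems consider "y = state letters [CZ] T"
    | T' where "y = state letters [] T'" "valid_thread T'" "suffix (obs_thread letters T') (obs_thread letters T)"
    by blast
  thus ?case
  proof cases
    case 1
    hence "z = state letters [] T" using cstep_state_Z step(2) by blast
    thus ?thesis using step.prems by blast
  next
    case 2 thus ?thesis using cstep_state_Nil[of T' letters Tau z] step(2) by (meson suffix_order.trans)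
  qed
qed auto

lemma ctaus_state_Gv:
  "ctaus (state letters [CGv] T) X \<Longrightarrow> valid_thread T \<Longrightarrow>
    (\<exists>T0. valid_thread T0 \<and> X = state letters [CGv] (T0 @ T)) \<or> (\<exists>T'. X = state letters [] T' \<and> valid_thread T')"
  unfolding config_taus_def
proof (induction rule: rtranclp_induct)
  case base thus ?case by (auto intro!: exI[of _ "[]"])
next
  case (step y z)
  from step.IH step.prems consider T0 where "valid_thread T0" "y = state letters [CGv] (T0 @ T)"
    | T' where "y = state letters [] T'" "valid_thread T'"
    by blast
  thus ?case
  proof cases
    case 1
    with cstep_state_Gv[of letters "T0 @ T" Tau z] step(2) consider "z = state letters [] (T0 @ T)"
      | k where "k \<in> {1..n}" "z = state letters [CGv] (CV k # T0 @ T)"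
      by auto
    thus ?thesis
    proof cases
      case 1 thus ?thesis using \<open>valid_thread T0\<close> step.prems by (intro disjI2 exI[of _ "T0 @ T"]) auto
    next
      case 2 thus ?thesis using \<open>valid_thread T0\<close> valid_const_intros(2)[OF 2(1)]
        by (intro disjI1 exI[of _ "CV k # T0"]) auto
    qed
  next
    case 2 thus ?thesis using cstep_state_Nil[of T' letters Tau z] step(2) by blast
  qed
qed

lemma state_Nil_no_weak_LamZ_LamV:
  "valid_thread T \<Longrightarrow> \<not> config_weak_step \<Sigma> n u v (state letters [] T) LamZ X \<and>
     \<not> config_weak_step \<Sigma> n u v (state letters [] T) LamV X"
proof -
  assume T: "valid_thread T"
  have "l \<noteq> LamZ \<and> l \<noteq> LamV" if "ctaus (state letters [] T) M1" "cstep M1 l M2" for M1 M2 l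
  proof -
    from ctaus_state_Nil[OF that(1) T] obtain T' where "M1 = state letters [] T'" "valid_thread T'"
      by blast
    thus ?thesis using cstep_state_Nil that(2) by blast
  qed
  thus ?thesis unfolding config_weak_step_def by auto
qed

lemma ctaus_to_emitter:
  "valid_thread T \<Longrightarrow> obs_thread letters T \<noteq> [] \<Longrightarrow>
   \<exists>w k T'. ctaus (add_mset T K) (add_mset (CW w k # T') K) \<and> isW n u v w k \<and> valid_thread T' \<and>
     obs_thread letters (CW w k # T') = obs_thread letters T \<and> (if letters then w \<noteq> [] else k \<noteq> 0)"
proof (induction T)
  case (Cons c T0)
  hence v: "valid_const c" "valid_thread T0" by auto
  from v(1) show ?case
  proof (cases rule: valid_const_cases)
    case (U k)
    have "ctaus (add_mset (c # T0) K) (add_mset (CW (u k) k # T0) K)"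
      using U by (intro config_taus_thread_step[where G="{#CW (u k) k # T0#}"]) (auto simp: thread_step_CU)
    moreover have "obs letters (CW (u k) k) = obs letters c" using U by (auto simp: obs_def)
    ultimately show ?thesis using U v(2) isW_u[OF U(1)] words_wf by fastforce
  next
    case (V k)
    have "ctaus (add_mset (c # T0) K) (add_mset (CW (v k) k # T0) K)"
      using V by (intro config_taus_thread_step[where G="{#CW (v k) k # T0#}"]) (auto simp: thread_step_CV)
    moreover have "obs letters (CW (v k) k) = obs letters c" using V by (auto simp: obs_def)
    ultimately show ?thesis using V v(2) isW_v[OF V(1)] words_wf by fastforce
  next
    case (W w k)
    show ?thesis
    proof (cases "if letters then w \<noteq> [] else k \<noteq> 0")
      case True thus ?thesis using W v(2) by (intro exI[of _ w] exI[of _ k] exI[of _ T0]) auto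
    next
      case False
      hence "obs letters c = []" using W by (auto simp: obs_def split: if_splits)
      hence obs: "obs_thread letters T0 = obs_thread letters (c # T0)" by simp
      hence "T0 \<noteq> []" using Cons.prems(2) by auto
      hence "ctaus (add_mset (c # T0) K) (add_mset T0 K)"
        using ctaus_W_vanish[OF W(2), of T0 K] W by (simp add: thread_config_def)
      with Cons.IH[OF v(2)] obs Cons.prems(2) show ?thesis by (metis config_taus_trans)
    qed
  qed
qed simp

lemma emitter_step:
  assumes "isW n u v w k" "if letters then w \<noteq> [] else k \<noteq> 0"
    and "obs_thread letters (CW w k # T) = b # x"
  shows "\<exists>c. tstep (CW w k) (obs_act b) T {#c # T#} \<and> tstep (CW w k) Tau T {#c # T#} \<and>
    valid_const c \<and> obs_thread letters (c # T) = x"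
proof (cases letters)
  case True
  then obtain a w' where w: "w = a # w'" using assms(2) by (cases w) auto
  hence "b = Inl a" "obs_thread letters (CW w' k # T) = x" using True assms(3) by (auto simp: obs_def)
  moreover have "valid_const (CW w' k)" using assms(1) w isW_Cons_tl valid_const_intros(3) by blast
  ultimately show ?thesis
    using assms(1) w isW_Cons_mem by (intro exI[of _ "CW w' k"]) (auto simp: thread_step_CW)
next
  case False
  hence k: "k \<in> {1..n}" using assms(1,2) isW_index by auto
  hence "b = Inr k" "obs_thread letters (CW w 0 # T) = x" using False assms(3) by (auto simp: obs_def)
  moreover have "valid_const (CW w 0)" using assms(1) k isW_index_0 valid_const_intros(3) by blast
  ultimately show ?thesis
    using assms(1) k by (intro exI[of _ "CW w 0"]) (auto simp: thread_step_CW)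
qed

lemma ctaus_state_to_emission:
  assumes "valid_thread T" "obs_thread letters T = b # x"
  shows "\<exists>T1 T'. ctaus (state letters [] T) (state letters [] T1) \<and> valid_thread T1 \<and>
    obs_thread letters T1 = obs_thread letters T \<and>
    cstep (state letters [] T1) (obs_act b) (state letters [] T') \<and>
    cstep (state letters [] T1) Tau (state letters [] T') \<and> valid_thread T' \<and> obs_thread letters T' = x"
proof -
  let ?O = "{#[observer letters]#}"
  have "obs_thread letters T \<noteq> []" using assms(2) by simp
  from ctaus_to_emitter[OF assms(1) this, of ?O] obtain w k T0 where
    e: "ctaus (add_mset T ?O) (add_mset (CW w k # T0) ?O)" "isW n u v w k" "valid_thread T0"
       "obs_thread letters (CW w k # T0) = obs_thread letters T" "if letters then w \<noteq> [] else k \<noteq> 0"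
    by blast
  have "T \<noteq> []" using assms(2) by auto
  hence "ctaus (state letters [] T) (state letters [] (CW w k # T0))"
    using e(1) by (simp add: state_def thread_config_def add_mset_commute)
  then obtain c where c: "tstep (CW w k) (obs_act b) T0 {#c # T0#}" "tstep (CW w k) Tau T0 {#c # T0#}"
    "valid_const c" "obs_thread letters (c # T0) = x"
    using emitter_step[OF e(2,5)] e(4) assms(2) by metis
  have "cstep (state letters [] (CW w k # T0)) l (state letters [] (c # T0))"
    if "tstep (CW w k) l T0 {#c # T0#}" for l
    using config_stepI[OF that, of ?O] by (simp add: state_Cons add_mset_commute)
  thus ?thesis using \<open>ctaus (state letters [] T) _\<close> e c valid_const_intros(3)[OF e(2)]
    by (intro exI[of _ "CW w k # T0"] exI[of _ "c # T0"]) auto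
qed

lemma config_weak_bisimulation_taus:
  assumes "config_weak_bisimulation \<Sigma> n u v R" "R M N" "ctaus M M'"
  shows "\<exists>N'. ctaus N N' \<and> R M' N'"
  using assms(3) unfolding config_taus_def
proof (induction rule: rtranclp_induct)
  case base thus ?case using assms(2) config_taus_refl by blast
next
  case (step y z)
  from step.IH obtain N1 where n1: "ctaus N N1" "R y N1" unfolding config_taus_def by blast
  with assms(1) step(2) obtain N2 where "config_weak_step \<Sigma> n u v N1 Tau N2" "R z N2"
    unfolding config_weak_bisimulation_def by blast
  thus ?case using n1 by (auto simp: config_weak_step_def config_taus_def intro: rtranclp_trans)
qed

text \<open>The left thread silently brings its first observable to the front and emits it; only the
  right thread can answer this action, after which the induction hypothesis applies.\<close>

lemma weak_bisim_state_Nil_subseq: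
  "config_weak_bisimulation \<Sigma> n u v R \<Longrightarrow> R (state letters [] T1) (state letters [] T2) \<Longrightarrow>
    valid_thread T1 \<Longrightarrow> valid_thread T2 \<Longrightarrow> subseq (obs_thread letters T1) (obs_thread letters T2)"
proof (induction "obs_thread letters T1" arbitrary: T1 T2)
  case Nil thus ?case by (metis list_emb_Nil)
next
  case (Cons b x)
  from ctaus_state_to_emission[OF Cons.prems(3) Cons.hyps(2)[symmetric]] obtain T1a T1' where
    p: "ctaus (state letters [] T1) (state letters [] T1a)"
       "cstep (state letters [] T1a) (obs_act b) (state letters [] T1')"
       "valid_thread T1'" "obs_thread letters T1' = x"
    by blast
  obtain N1 where n1: "ctaus (state letters [] T2) N1" "R (state letters [] T1a) N1"
    using config_weak_bisimulation_taus[OF Cons.prems(1,2) p(1)] by blast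
  obtain T2a where t2a: "N1 = state letters [] T2a" "valid_thread T2a"
    "suffix (obs_thread letters T2a) (obs_thread letters T2)"
    using ctaus_state_Nil[OF n1(1) Cons.prems(4)] by blast
  obtain N2 where n2: "config_weak_step \<Sigma> n u v N1 (obs_act b) N2" "R (state letters [] T1') N2"
    using Cons.prems(1) n1(2) p(2) unfolding config_weak_bisimulation_def by blast
  then obtain M1 M2 where m: "ctaus N1 M1" "cstep M1 (obs_act b) M2" "ctaus M2 N2"
    by (auto simp: config_weak_step_def)
  obtain T2b where t2b: "M1 = state letters [] T2b" "valid_thread T2b"
    "suffix (obs_thread letters T2b) (obs_thread letters T2a)"
    using ctaus_state_Nil[OF m(1)[unfolded t2a(1)] t2a(2)] by blast
  have "observable letters b" using obs_thread_observable[of b letters T1] Cons.hyps(2)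
    by (metis list.set_intros(1))
  then obtain T2c where t2c: "M2 = state letters [] T2c" "valid_thread T2c"
    "suffix (b # obs_thread letters T2c) (obs_thread letters T2b)"
    using cstep_state_Nil[OF t2b(2) m(2)[unfolded t2b(1)]] by blast
  obtain T2d where t2d: "N2 = state letters [] T2d" "valid_thread T2d"
    "suffix (obs_thread letters T2d) (obs_thread letters T2c)"
    using ctaus_state_Nil[OF m(3)[unfolded t2c(1)] t2c(2)] by blast
  have "subseq x (obs_thread letters T2d)" using Cons.hyps(1)[of T1' T2d] p(3,4) n2(2) t2d Cons.prems(1)
    by simp
  hence "subseq (b # x) (b # obs_thread letters T2c)"
    using t2d(3) by (meson subseq_Cons2 subseq_order.trans suffix_imp_subseq)
  moreover have "suffix (b # obs_thread letters T2c) (obs_thread letters T2)"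
    using t2c(3) t2b(3) t2a(3) by (meson suffix_order.trans)
  ultimately show ?case using Cons.hyps(2) by (metis subseq_order.trans suffix_imp_subseq)
qed

lemma weak_bisim_state_Nil_obs_eq:
  "config_weak_bisimulation \<Sigma> n u v R \<Longrightarrow> R (state letters [] T1) (state letters [] T2) \<Longrightarrow>
    valid_thread T1 \<Longrightarrow> valid_thread T2 \<Longrightarrow> obs_thread letters T1 = obs_thread letters T2"
  using weak_bisim_state_Nil_subseq[of R letters T1 T2]
    weak_bisim_state_Nil_subseq[of "\<lambda>M N. R N M" letters T2 T1]
    config_weak_bisimulation_converse subseq_order.antisym
  by blast

text \<open>The silent step \<open>Z \<rightarrow> \<epsilon>\<close> must be answered without the partner losing its \<open>Z\<close>
  before its thread has reached the same observation: otherwise only one side could still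
  perform \<open>\<lambda>\<^sub>Z\<close>.\<close>

lemma weak_bisim_state_Z_suffix:
  assumes R: "config_weak_bisimulation \<Sigma> n u v R" and "R (state letters [CZ] T1) (state letters [CZ] T2)"
    and v: "valid_thread T1" "valid_thread T2"
  shows "suffix (obs_thread letters T1) (obs_thread letters T2)"
proof -
  obtain N' where "config_weak_step \<Sigma> n u v (state letters [CZ] T2) Tau N'" "R (state letters [] T1) N'"
    using R assms(2) cstep_state_Z_to_Nil[of Tau letters T1]
    unfolding config_weak_bisimulation_def by blast
  hence n: "ctaus (state letters [CZ] T2) N'" "R (state letters [] T1) N'"
    by (simp_all add: config_weak_step_def)
  from ctaus_state_Z[OF n(1) v(2)] show ?thesis
  proof
    assume "N' = state letters [CZ] T2"
    then obtain M' where "config_weak_step \<Sigma> n u v (state letters [] T1) LamZ M'"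
      using R n(2) cstep_state_Z_to_Nil[of LamZ letters T2]
      unfolding config_weak_bisimulation_def by blast
    with state_Nil_no_weak_LamZ_LamV[OF v(1)] show ?thesis by blast
  next
    assume "\<exists>T'. N' = state letters [] T' \<and> valid_thread T' \<and>
      suffix (obs_thread letters T') (obs_thread letters T2)"
    with weak_bisim_state_Nil_obs_eq[OF R _ v(1)] n(2) show ?thesis by metis
  qed
qed

lemma weak_bisim_state_Z_obs_eq:
  "config_weak_bisimulation \<Sigma> n u v R \<Longrightarrow> R (state letters [CZ] T1) (state letters [CZ] T2) \<Longrightarrow>
    valid_thread T1 \<Longrightarrow> valid_thread T2 \<Longrightarrow> obs_thread letters T1 = obs_thread letters T2"
  using weak_bisim_state_Z_suffix[of R letters T1 T2]
    weak_bisim_state_Z_suffix[of "\<lambda>M N. R N M" letters T2 T1]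
    config_weak_bisimulation_converse suffix_order.antisym
  by blast

text \<open>After \<open>\<lambda>\<^sub>V\<close> the partner has only prefixed its thread by further \<open>V\<close>-constants, and the
  resulting \<open>Z\<close>-states must agree.\<close>

lemma weak_bisim_state_Gv_prefix:
  assumes R: "config_weak_bisimulation \<Sigma> n u v R" and "R (state letters [CGv] T1) (state letters [CGv] T2)"
    and v: "valid_thread T1" "valid_thread T2"
  shows "\<exists>T0. obs_thread letters T1 = obs_thread letters T0 @ obs_thread letters T2"
proof -
  obtain N' where n: "config_weak_step \<Sigma> n u v (state letters [CGv] T2) LamV N'"
      "R (state letters [CZ] T1) N'"
    using R assms(2) cstep_state_Gv_LamV unfolding config_weak_bisimulation_def by blast
  then obtain N1 N2 where m: "ctaus (state letters [CGv] T2) N1" "cstep N1 LamV N2" "ctaus N2 N'"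
    by (auto simp: config_weak_step_def)
  obtain T0 where T0: "valid_thread T0" "N1 = state letters [CGv] (T0 @ T2)"
  proof -
    from ctaus_state_Gv[OF m(1) v(2)] show ?thesis
    proof
      assume "\<exists>T'. N1 = state letters [] T' \<and> valid_thread T'"
      with cstep_state_Nil m(2) show ?thesis by blast
    qed (use that in blast)
  qed
  hence N2: "N2 = state letters [CZ] (T0 @ T2)" using cstep_state_Gv m(2) by blast
  have v': "valid_thread (T0 @ T2)" using T0(1) v(2) by auto
  from ctaus_state_Z[OF m(3)[unfolded N2] v'] show ?thesis
  proof
    assume "N' = state letters [CZ] (T0 @ T2)"
    with weak_bisim_state_Z_obs_eq[OF R _ v(1) v'] n(2) show ?thesis by auto
  next
    assume "\<exists>T'. N' = state letters [] T' \<and> valid_thread T' \<and>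
      suffix (obs_thread letters T') (obs_thread letters (T0 @ T2))"
    then obtain T' where "N' = state letters [] T'" "valid_thread T'" by blast
    moreover obtain N'' where "config_weak_step \<Sigma> n u v N' LamZ N''"
      using R n(2) cstep_state_Z_to_Nil[of LamZ letters T1]
      unfolding config_weak_bisimulation_def by blast
    ultimately show ?thesis using state_Nil_no_weak_LamZ_LamV by blast
  qed
qed

lemma weak_bisim_state_Gv_obs_eq:
  assumes R: "config_weak_bisimulation \<Sigma> n u v R" and "R (state letters [CGv] T1) (state letters [CGv] T2)"
    and "valid_thread T1" "valid_thread T2"
  shows "obs_thread letters T1 = obs_thread letters T2"
proof -
  obtain T0 where "obs_thread letters T1 = obs_thread letters T0 @ obs_thread letters T2"
    using weak_bisim_state_Gv_prefix[OF assms] by blast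
  moreover obtain T0' where "obs_thread letters T2 = obs_thread letters T0' @ obs_thread letters T1"
    using weak_bisim_state_Gv_prefix[OF config_weak_bisimulation_converse[OF R]] assms(2-4) by blast
  ultimately have "length (obs_thread letters T0) + length (obs_thread letters T0') = 0"
    by (metis add_cancel_right_left append.assoc length_append self_append_conv2)
  thus ?thesis using \<open>obs_thread letters T1 = _\<close> by simp
qed

lemma weak_bisim_state_obs_eq:
  "config_weak_bisimulation \<Sigma> n u v R \<Longrightarrow> h \<in> test_heads \<Longrightarrow>
    R (state letters h T1) (state letters h T2) \<Longrightarrow> valid_thread T1 \<Longrightarrow> valid_thread T2 \<Longrightarrow>
    obs_thread letters T1 = obs_thread letters T2"
  using weak_bisim_state_Nil_obs_eq weak_bisim_state_Z_obs_eq weak_bisim_state_Gv_obs_eq by blast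

definition C'_configs :: "'a config \<Rightarrow> 'a config \<Rightarrow> bool" where
  "C'_configs M N \<longleftrightarrow> (\<exists>K1 K2. M = add_mset [CC'] K1 \<and> N = add_mset [CC'] K2 \<and>
     (\<forall>t\<in>#K1. disposable t) \<and> (\<forall>t\<in>#K2. disposable t))"

definition obs_equiv_states :: "bool \<Rightarrow> 'a config \<Rightarrow> 'a config \<Rightarrow> bool" where
  "obs_equiv_states letters M N \<longleftrightarrow> (\<exists>h T1 T2. h \<in> test_heads \<and>
     M = state letters h T1 \<and> N = state letters h T2 \<and> valid_thread T1 \<and> valid_thread T2 \<and>
     obs_thread letters T1 = obs_thread letters T2)"

definition state_bisim :: "bool \<Rightarrow> 'a config \<Rightarrow> 'a config \<Rightarrow> bool" where
  "state_bisim letters M N \<longleftrightarrow> obs_equiv_states letters M N \<or> C'_configs M N \<or> (M = N \<and> wf_config M)"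

lemma state_bisimI:
  "h \<in> test_heads \<Longrightarrow> valid_thread T1 \<Longrightarrow> valid_thread T2 \<Longrightarrow>
    obs_thread letters T1 = obs_thread letters T2 \<Longrightarrow> state_bisim letters (state letters h T1) (state letters h T2)"
  unfolding state_bisim_def obs_equiv_states_def by blast

lemma state_bisim_sym: "state_bisim letters M N \<Longrightarrow> state_bisim letters N M"
  unfolding state_bisim_def obs_equiv_states_def C'_configs_def by metis

lemma wf_C'_config: "\<forall>t\<in>#K. disposable t \<Longrightarrow> wf_config (add_mset [CC'] K)"
proof -
  assume K: "\<forall>t\<in>#K. disposable t"
  have "t \<noteq> [] \<and> (\<forall>x\<in>set t. x \<notin> solo_consts)" if "t \<in># K" for t
    using K that valid_const_not_solo by (fastforce simp: disposable_def solo_consts_def)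
  thus ?thesis by (auto simp: wf_config_def)
qed

lemma state_bisim_wf: "state_bisim letters M N \<Longrightarrow> wf_config M \<and> wf_config N"
  unfolding state_bisim_def obs_equiv_states_def C'_configs_def using wf_state wf_C'_config by auto

lemma disposable_state_thread:
  "h \<in> test_heads \<Longrightarrow> valid_thread T \<Longrightarrow> \<forall>t\<in># thread_config (h @ T). disposable t"
  unfolding disposable_def thread_config_def by auto

text \<open>When the observer moves, the partner performs the same action; after \<open>\<lambda>\<^sub>I\<close> or \<open>\<lambda>\<^sub>S\<close>
  both sides are governed by \<open>C'\<close>, which can silently create and dispose of every thread.\<close>

lemma state_bisim_observer_step:
  assumes "h \<in> test_heads" "valid_thread T1" "valid_thread T2"
    and "obs_thread letters T1 = obs_thread letters T2"
    and "tstep (observer letters) l [] G"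
  shows "branching_matches \<Sigma> n u v (state_bisim letters) (state letters h T1) (state letters h T2) l
    (G + thread_config (h @ T1))"
proof (rule branching_matchesI)
  show "cstep (state letters h T2) l (G + thread_config (h @ T2))"
    using config_stepI[OF assms(5)] by (simp add: state_def)
  show "state_bisim letters (state letters h T1) (state letters h T2)"
    using assms(1-4) by (rule state_bisimI)
  from thread_step_observer[OF assms(5)] consider "G = {#[CC']#}" | "G = {#[observer letters]#}" by blast
  thus "state_bisim letters (G + thread_config (h @ T1)) (G + thread_config (h @ T2))"
  proof cases
    case 1 thus ?thesis using disposable_state_thread assms(1-3)
      unfolding state_bisim_def C'_configs_def by auto
  next
    case 2 thus ?thesis using assms(1-4) state_bisimI by (simp add: state_def)
  qed
qed

lemma state_bisim_head_step:
  assumes "h \<in> {[CZ], [CGv]}" "valid_thread T1" "valid_thread T2"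
    and "obs_thread letters T1 = obs_thread letters T2"
    and "h = [c]" "tstep c l T1 G"
  shows "branching_matches \<Sigma> n u v (state_bisim letters) (state letters h T1) (state letters h T2) l
    (G + {#[observer letters]#})"
proof -
  let ?O = "{#[observer letters]#}"
  have rel: "state_bisim letters (state letters h' T1) (state letters h' T2)" if "h' \<in> test_heads" for h'
    using that assms(2-4) by (rule state_bisimI)
  have matched: "branching_matches \<Sigma> n u v (state_bisim letters) (state letters h T1) (state letters h T2) l
      (state letters h' T1')"
    if "tstep c l T2 (thread_config (h' @ T2'))" "G = thread_config (h' @ T1')"
      "state_bisim letters (state letters h' T1') (state letters h' T2')" for h' T1' T2'
  proof (rule branching_matchesI)
    show "cstep (state letters h T2) l (state letters h' T2')"
      using config_stepI[OF that(1), of ?O] assms(5) by (simp add: state_def add_mset_commute)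
  qed (use that(3) rel assms(1) in auto)
  have G: "G + ?O = state letters h' T1'" if "G = thread_config (h' @ T1')" for h' T1'
    using that by (simp add: state_def add_mset_commute)
  from assms(1,5) consider "c = CZ" | "c = CGv" by auto
  thus ?thesis
  proof cases
    case 1
    with assms(6) have l: "l = Tau \<or> l = LamZ" "G = thread_config ([] @ T1)" by (auto simp: thread_step_CZ)
    thus ?thesis unfolding G[OF l(2)] using 1 rel
      by (intro matched[where h'="[]" and T1'=T1 and T2'=T2]) (auto simp: thread_step_CZ)
  next
    case 2
    from assms(6)[unfolded 2 thread_step_CGv] show ?thesis
    proof (elim disjE conjE bexE)
      fix k assume a: "l = Tau" "k \<in> {1..n}" "G = {#CGv # CV k # T1#}"
      hence g: "G = thread_config ([CGv] @ CV k # T1)" by simp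
      thus ?thesis unfolding G[OF g] using a 2 assms(2-4) valid_const_intros(2)[OF a(2)]
        by (intro matched[where h'="[CGv]" and T1'="CV k # T1" and T2'="CV k # T2"] state_bisimI)
          (auto simp: thread_step_CGv)
    next
      assume a: "l = Tau" "G = thread_config T1"
      hence g: "G = thread_config ([] @ T1)" by simp
      thus ?thesis unfolding G[OF g] using a 2 rel
        by (intro matched[where h'="[]" and T1'=T1 and T2'=T2]) (auto simp: thread_step_CGv)
    next
      assume a: "l = LamV" "G = {#CZ # T1#}"
      hence g: "G = thread_config ([CZ] @ T1)" by simp
      thus ?thesis unfolding G[OF g] using a 2 rel
        by (intro matched[where h'="[CZ]" and T1'=T1 and T2'=T2]) (auto simp: thread_step_CGv)
    qed
  qed
qed

text \<open>A step of the main thread is answered by the partner's main thread: a silent step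
  is ignored, a step mimicking the observer is answered by the observer itself, and a step
  consuming the first observable is answered after the partner has silently brought the same
  observable to the front of its thread.\<close>

lemma state_bisim_thread_step:
  assumes v: "valid_thread T1" "valid_thread T2" and obs_eq: "obs_thread letters T1 = obs_thread letters T2"
    and "T1 = c # rest" "tstep c l rest G"
  shows "branching_matches \<Sigma> n u v (state_bisim letters) (state letters [] T1) (state letters [] T2) l
    (G + {#[observer letters]#})"
proof -
  from valid_thread_step[of c rest l G letters] assms(1,4,5) obtain T' where
    T': "G = thread_config T'" "valid_thread T'" and
    cases: "(obs_thread letters T' = obs_thread letters T1 \<and>
               (l = Tau \<or> tstep (observer letters) l [] {#[observer letters]#})) \<or>
            (\<exists>b. obs_thread letters T1 = b # obs_thread letters T' \<and> (l = Tau \<or> l = obs_act b))"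
    by auto
  have M': "G + {#[observer letters]#} = state letters [] T'" by (simp add: state_def T'(1))
  have rel: "state_bisim letters (state letters [] T1) (state letters [] T2)"
    using v obs_eq by (intro state_bisimI) auto
  from cases consider (silent) "obs_thread letters T' = obs_thread letters T1" "l = Tau"
    | (observer) "obs_thread letters T' = obs_thread letters T1"
        "tstep (observer letters) l [] {#[observer letters]#}"
    | (emit) b where "obs_thread letters T1 = b # obs_thread letters T'" "l = Tau \<or> l = obs_act b"
    by blast
  thus ?thesis
  proof cases
    case silent
    hence "state_bisim letters (state letters [] T') (state letters [] T2)"
      using T'(2) v obs_eq by (intro state_bisimI) auto
    thus ?thesis unfolding M' branching_matches_def using silent by blast
  next
    case observer
    have "cstep (state letters [] T2) l (state letters [] T2)"
      using config_stepI[OF observer(2), of "thread_config T2"] by (simp add: state_def)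
    moreover have "state_bisim letters (state letters [] T') (state letters [] T2)"
      using observer T'(2) v obs_eq by (intro state_bisimI) auto
    ultimately show ?thesis unfolding M' using rel branching_matchesI by blast
  next
    case emit
    hence "obs_thread letters T2 = b # obs_thread letters T'" using obs_eq by simp
    from ctaus_state_to_emission[OF v(2) this] obtain T2a T2' where
      p: "ctaus (state letters [] T2) (state letters [] T2a)" "valid_thread T2a"
        "obs_thread letters T2a = obs_thread letters T2"
        "cstep (state letters [] T2a) (obs_act b) (state letters [] T2')"
        "cstep (state letters [] T2a) Tau (state letters [] T2')"
        "valid_thread T2'" "obs_thread letters T2' = obs_thread letters T'"
      by blast
    have "cstep (state letters [] T2a) l (state letters [] T2')" using emit(2) p(4,5) by auto
    moreover have "state_bisim letters (state letters [] T1) (state letters [] T2a)"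
      using v p(2,3) obs_eq by (intro state_bisimI) auto
    moreover have "state_bisim letters (state letters [] T') (state letters [] T2')"
      using T'(2) p(6,7) by (intro state_bisimI) auto
    ultimately show ?thesis unfolding M' branching_matches_def using p(1) by blast
  qed
qed

lemma obs_equiv_states_step:
  assumes "obs_equiv_states letters M N" "cstep M l M'"
  shows "branching_matches \<Sigma> n u v (state_bisim letters) M N l M'"
proof -
  from assms(1) obtain h T1 T2 where hT: "h \<in> test_heads" "M = state letters h T1" "N = state letters h T2"
    "valid_thread T1" "valid_thread T2" "obs_thread letters T1 = obs_thread letters T2"
    unfolding obs_equiv_states_def by blast
  from assms(2)[unfolded hT(2)] show ?thesis
  proof (cases rule: cstep_state_cases)
    case (observer G) thus ?thesis using state_bisim_observer_step hT by simp
  next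
    case (thread c rest G)
    show ?thesis
    proof (cases "h = []")
      case True thus ?thesis using state_bisim_thread_step thread hT by simp
    next
      case False
      hence "h = [c]" "rest = T1" "h \<in> {[CZ], [CGv]}" using hT(1) thread(1) by auto
      thus ?thesis using state_bisim_head_step hT thread by simp
    qed
  qed
qed

lemma config_branching_bisimulation_state_bisim:
  "config_branching_bisimulation \<Sigma> n u v (state_bisim letters)"
  unfolding config_branching_bisimulation_def
proof (intro allI impI conjI)
  fix M N assume s: "state_bisim letters M N"
  thus "wf_config M" "wf_config N" using state_bisim_wf by auto
  fix l M' assume st: "cstep M l M'"
  have refl: "state_bisim letters X X" if "wf_config X" for X using that by (simp add: state_bisim_def)
  have wf': "wf_config M'" using config_step_wf st state_bisim_wf[OF s] by blast
  from s consider "obs_equiv_states letters M N" | "C'_configs M N" | "M = N"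
    unfolding state_bisim_def by blast
  thus "branching_matches \<Sigma> n u v (state_bisim letters) M N l M'"
  proof cases
    case 1 thus ?thesis using obs_equiv_states_step st by blast
  next
    case 2
    hence "ctaus N M" using ctaus_C'_configs unfolding C'_configs_def by blast
    thus ?thesis using st refl state_bisim_wf[OF s] wf' unfolding branching_matches_def by blast
  next
    case 3
    thus ?thesis using st refl state_bisim_wf[OF s] wf' by (blast intro: branching_matchesI)
  qed
qed

lemma bisim_state_iff_obs_eq:
  assumes h: "h \<in> test_heads" and v: "valid_thread T1" "valid_thread T2"
    and nP: "norm P = Some (state letters h T1)" and nQ: "norm Q = Some (state letters h T2)"
    and eq: "eq \<in> {branching_bisim \<Sigma> n u v, weak_bisim \<Sigma> n u v}"
  shows "eq P Q \<longleftrightarrow> obs_thread letters T1 = obs_thread letters T2"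
proof
  assume "eq P Q"
  hence "weak_bisim \<Sigma> n u v P Q" using eq branching_bisim_imp_weak_bisim by auto
  then obtain R where "config_weak_bisimulation \<Sigma> n u v R" "R (state letters h T1) (state letters h T2)"
    using weak_bisim_imp_config_weak_bisimulation[OF _ nP nQ] wf_state h v by blast
  thus "obs_thread letters T1 = obs_thread letters T2" using weak_bisim_state_obs_eq h v by blast
next
  assume "obs_thread letters T1 = obs_thread letters T2"
  hence "state_bisim letters (state letters h T1) (state letters h T2)" using state_bisimI h v by blast
  hence "branching_bisim \<Sigma> n u v P Q"
    using config_branching_bisimulation_imp_branching_bisim[OF config_branching_bisimulation_state_bisim
        state_bisim_sym _ nP nQ] by blast
  thus "eq P Q" using eq branching_bisim_imp_weak_bisim by auto
qed

lemma norm_initial_proc: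
  assumes "B \<in> {Eps, Const CZ, Const CGv}"
    and "set ps \<subseteq> {Const (CU k) | k. k \<in> {1..n}} \<union> {Const (CV k) | k. k \<in> {1..n}}"
  obtains h cs where "h \<in> test_heads" "valid_thread cs"
    "\<And>X ds. norm (Par (Const X) (Seq B (Seq (seqs ps) (seqs (map Const ds))))) =
       Some (add_mset [X] (thread_config (h @ cs @ ds)))"
proof -
  have "\<exists>h. h \<in> test_heads \<and> norm B = Some (thread_config h)"
    using assms(1) by (elim insertE) (auto simp: thread_config_def intro: exI[of _ "[]"] exI[of _ "[CZ]"]
        exI[of _ "[CGv]"])
  then obtain h where h: "h \<in> test_heads" "norm B = Some (thread_config h)" by blast
  define cs where "cs = map (\<lambda>p. case p of Const c \<Rightarrow> c | _ \<Rightarrow> CX) ps"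
  have ps: "\<forall>p\<in>set ps. \<exists>k\<in>{1..n}. p = Const (CU k) \<or> p = Const (CV k)" using assms(2) by blast
  hence "ps = map Const cs" unfolding cs_def by (induction ps) auto
  moreover have "valid_thread cs" unfolding cs_def using ps valid_const_intros by (induction ps) auto
  ultimately show ?thesis
    using that h by (simp add: seqs_map_Const seq_config_thread_config)
qed

lemma obs_thread_map_CU_CV:
  "obs_thread True (map CU is) = map Inl (concat (map u is))"
  "obs_thread True (map CV is) = map Inl (concat (map v is))"
  "obs_thread False (map CU is) = map Inr is"
  "obs_thread False (map CV is) = map Inr is"
  by (induction "is") (auto simp: obs_def)

end

theorem lemma5:
  fixes \<Sigma> :: "'a set" and n :: nat and u v :: "nat \<Rightarrow> 'a list"
    and iss js :: "nat list" and B :: "'a proc" and ps :: "'a proc list"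
    and eq :: "'a proc \<Rightarrow> 'a proc \<Rightarrow> bool"
  assumes "finite \<Sigma>" and "card \<Sigma> \<ge> 2"
    and "\<forall>k\<in>{1..n}. u k \<noteq> [] \<and> set (u k) \<subseteq> \<Sigma> \<and> v k \<noteq> [] \<and> set (v k) \<subseteq> \<Sigma>"
    and "iss \<noteq> []" and "set iss \<subseteq> {1..n}"
    and "js \<noteq> []" and "set js \<subseteq> {1..n}"
    and "B \<in> {Eps, Const CZ, Const CGv}"
    and "set ps \<subseteq> {Const (CU k) | k. k \<in> {1..n}} \<union> {Const (CV k) | k. k \<in> {1..n}}"
    and "eq \<in> {branching_bisim \<Sigma> n u v, weak_bisim \<Sigma> n u v}"
  shows "(eq (Par (Const CI) (Seq B (Seq (seqs ps) (seqs (map (\<lambda>i. Const (CU i)) iss)))))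
             (Par (Const CI) (Seq B (Seq (seqs ps) (seqs (map (\<lambda>j. Const (CV j)) js)))))
          \<longleftrightarrow> concat (map u iss) = concat (map v js))
       \<and> (eq (Par (Const CS) (Seq B (Seq (seqs ps) (seqs (map (\<lambda>i. Const (CU i)) iss)))))
             (Par (Const CS) (Seq B (Seq (seqs ps) (seqs (map (\<lambda>j. Const (CV j)) js)))))
          \<longleftrightarrow> iss = js)"
proof -
  interpret pcp_instance \<Sigma> n u v using assms(3) by unfold_locales
  obtain h cs where h: "h \<in> test_heads" "valid_thread cs" and nf:
    "\<And>X ds. norm (Par (Const X) (Seq B (Seq (seqs ps) (seqs (map Const ds))))) =
       Some (add_mset [X] (thread_config (h @ cs @ ds)))"
    using norm_initial_proc[OF assms(8,9)] by blast
  have vU: "valid_thread (cs @ map CU iss)" and vV: "valid_thread (cs @ map CV js)"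
    using h(2) assms(5,7) valid_const_intros by auto
  have "eq (Par (Const (observer letters)) (Seq B (Seq (seqs ps) (seqs (map Const (map CU iss))))))
        (Par (Const (observer letters)) (Seq B (Seq (seqs ps) (seqs (map Const (map CV js))))))
      \<longleftrightarrow> obs_thread letters (cs @ map CU iss) = obs_thread letters (cs @ map CV js)" for letters
    by (rule bisim_state_iff_obs_eq[OF h(1) vU vV _ _ assms(10)]; unfold state_def; rule nf)
  from this[of True] this[of False] show ?thesis
    by (simp add: observer_def obs_thread_map_CU_CV inj_map_eq_map comp_def)
qed

end
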